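(* Let $\mathbb{X}$ be a reverse differential restriction category with reverse derivative $R$. For each map $f:A\to B$ define $$D[f]:=(\iota_0\times 1_A)\,R[R[f]]\,\pi_1 \;:\; A\times A\to B,$$ where $\iota_0=\langle 1_A,0\rangle:A\to A\times B$, so that $\iota_0\times 1_A:A\times A\to (A\times B)\times A$ and $\pi_1:A\times B\to B$. Then $D$ satisfies the axioms [DR.1]–[DR.9] below, i.e. $(\mathbb{X},D)$ is a differential restriction category.
   Context: Composition is written in diagrammatic order: $fg$ means "first $f$, then $g$". A restriction category is a category with an operation sending each $f:A\to B$ to a map $\bar f:A\to A$ such that $\bar f f=f$, $\bar f\bar g=\bar g\bar f$ (for $f,g$ with common domain), $\overline{\bar f g}=\bar f\bar g$, and $f\bar g=\overline{fg}\,f$. A map $f$ is total if $\bar f=1$. For parallel maps, $f\le g$ means $\bar f g=f$; a nowhere-defined map $\emptyset$ is a least element for $\le$. The category has restriction products if: - there is an object $1$ with a total map $!_A:A\to 1$ for each $A$ such that every $f:A\to 1$ equals $\bar f\,!_A$; - for all $A,B$ there is an object $A\times B$ with total maps $\pi_0,\pi_1$ such that for all $f:C\to A$, $g:C\to B$ there is a unique $\langle f,g\rangle:C\to A\times B$ with $\langle f,g\rangle\pi_0=\bar g f$ and $\langle f,g\rangle\pi_1=\bar f g$. Write $f\times g=\langle \pi_0 f,\pi_1 g\rangle$. A Cartesian left additive restriction category is a restriction category with restriction products in which every hom-set is a commutative monoid $(+,0)$ such that: - $\overline{f+g}=\bar f\bar g$ and $\bar 0=1$; - $x(f+g)=xf+xg$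 and $x0=\bar x 0$; - $(f+g)\pi_i=f\pi_i+g\pi_i$ and $0\pi_i=0$. Write $\iota_0=\langle 1,0\rangle:A\to A\times B$ and $\iota_1=\langle 0,1\rangle:B\to A\times B$. A reverse differential restriction category (RDRC) is a Cartesian left additive restriction category with an operation sending each $f:A\to B$ to $R[f]:A\times B\to A$ such that: - [RD.1] $R[f+g]=R[f]+R[g]$ and $R[0]=0$. - [RD.2] $\langle a,b+c\rangle R[f]=\langle a,b\rangle R[f]+\langle a,c\rangle R[f]$ and $\langle a,0\rangle R[f]=\overline{af}\,0$ for all suitable $a,b,c$. - [RD.3] $R[\pi_j]=\pi_1\iota_j$. - [RD.4] $R[\langle f,g\rangle]=(1\times\pi_0)R[f]+(1\times\pi_1)R[g]$. - [RD.5] $R[fg]=\langle \pi_0,\langle\pi_0 f,\pi_1\rangle R[g]\rangle R[f]$. - [RD.6] $\langle 1\times\pi_0,\,0\times\pi_1\rangle(\iota_0\times 1)R[R[R[f]]]\pi_1=(1\times\pi_1)R[f]$. - [RD.7] With $g:=(\iota_0\times 1)R[R[f]]\pi_1$, one has $(\iota_0\times1)R[R[g]]\pi_1=\mathrm{ex}\,(\iota_0\times 1)R[R[g]]\pi_1$, where $\mathrm{ex}=\langle\pi_0\times\pi_0,\pi_1\times\pi_1\rangle:(A\times A)\times(A\times A)\to(A\times A)\times(A\times A)$. - [RD.8] $\overline{R[f]}=\bar f\times 1$. - [RD.9] $R[\bar f]=(\bar f\times 1)\pi_1$. A differential restriction category is a Cartesian left additive restriction category with an operation sending each $f:A\to B$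 to $D[f]:A\times A\to B$ (first argument the point, second the direction) such that, for all suitable maps $a,u,v,w$: - [DR.1] $D[0]=0$ and $D[f+g]=D[f]+D[g]$. - [DR.2] $\langle a,v+w\rangle D[f]=\langle a,v\rangle D[f]+\langle a,w\rangle D[f]$ and $\langle a,0\rangle D[f]=\overline{af}\,0$. - [DR.3] $D[1]=\pi_1$, $D[\pi_0]=\pi_1\pi_0$, $D[\pi_1]=\pi_1\pi_1$. - [DR.4] $D[\langle f,g\rangle]=\langle D[f],D[g]\rangle$. - [DR.5] $D[fg]=\langle \pi_0 f,D[f]\rangle D[g]$. - [DR.6] $\langle\langle a,v\rangle,\langle 0,w\rangle\rangle D[D[f]]=\bar v\,\langle a,w\rangle D[f]$. - [DR.7] $\langle\langle a,v\rangle,\langle u,0\rangle\rangle D[D[f]]=\langle\langle a,u\rangle,\langle v,0\rangle\rangle D[D[f]]$. - [DR.8] $\overline{D[f]}=\bar f\times 1$. - [DR.9] $D[\bar f]=(\bar f\times 1)\pi_1$. *)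

theory Defs
  imports Main
begin

text \<open>
  Objects have type 'o, maps have type 'm; composition is diagrammatic:
  comp S f g means "first f, then g".
\<close>

record ('o, 'm) cat_data =
  obj   :: "'o set"
  arr   :: "'m set"
  src   :: "'m \<Rightarrow> 'o"
  tgt   :: "'m \<Rightarrow> 'o"
  ident :: "'o \<Rightarrow> 'm"
  comp  :: "'m \<Rightarrow> 'm \<Rightarrow> 'm"
  rest  :: "'m \<Rightarrow> 'm"
  one_obj :: "'o"
  bang  :: "'o \<Rightarrow> 'm"
  prd   :: "'o \<Rightarrow> 'o \<Rightarrow> 'o"
  pr0   :: "'o \<Rightarrow> 'o \<Rightarrow> 'm"
  pr1   :: "'o \<Rightarrow> 'o \<Rightarrow> 'm"
  pair  :: "'m \<Rightarrow> 'm \<Rightarrow> 'm"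
  plus  :: "'m \<Rightarrow> 'm \<Rightarrow> 'm"
  zer   :: "'o \<Rightarrow> 'o \<Rightarrow> 'm"
  rd    :: "'m \<Rightarrow> 'm"

definition hom :: "('o, 'm, 'x) cat_data_scheme \<Rightarrow> 'o \<Rightarrow> 'o \<Rightarrow> 'm set" where
  "hom S X Y = {f \<in> arr S. src S f = X \<and> tgt S f = Y}"

definition total :: "('o, 'm, 'x) cat_data_scheme \<Rightarrow> 'm \<Rightarrow> bool" where
  "total S f \<longleftrightarrow> rest S f = ident S (src S f)"

definition ftimes :: "('o, 'm, 'x) cat_data_scheme \<Rightarrow> 'm \<Rightarrow> 'm \<Rightarrow> 'm" where
  "ftimes S f g = pair S (comp S (pr0 S (src S f) (src S g)) f)
                         (comp S (pr1 S (src S f) (src S g)) g)"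

definition iota0 :: "('o, 'm, 'x) cat_data_scheme \<Rightarrow> 'o \<Rightarrow> 'o \<Rightarrow> 'm" where
  "iota0 S X Y = pair S (ident S X) (zer S X Y)"

definition iota1 :: "('o, 'm, 'x) cat_data_scheme \<Rightarrow> 'o \<Rightarrow> 'o \<Rightarrow> 'm" where
  "iota1 S X Y = pair S (zer S Y X) (ident S Y)"

definition is_category :: "('o, 'm, 'x) cat_data_scheme \<Rightarrow> bool" where
  "is_category S \<longleftrightarrow>
     (\<forall>f \<in> arr S. src S f \<in> obj S \<and> tgt S f \<in> obj S) \<and>
     (\<forall>X \<in> obj S. ident S X \<in> hom S X X) \<and>
     (\<forall>X \<in> obj S. \<forall>Y \<in> obj S. \<forall>Z \<in> obj S. \<forall>f \<in> hom S X Y. \<forall>g \<in> hom S Y Z.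
        comp S f g \<in> hom S X Z) \<and>
     (\<forall>X \<in> obj S. \<forall>Y \<in> obj S. \<forall>Z \<in> obj S. \<forall>W \<in> obj S.
        \<forall>f \<in> hom S X Y. \<forall>g \<in> hom S Y Z. \<forall>h \<in> hom S Z W.
        comp S (comp S f g) h = comp S f (comp S g h)) \<and>
     (\<forall>X \<in> obj S. \<forall>Y \<in> obj S. \<forall>f \<in> hom S X Y.
        comp S (ident S X) f = f \<and> comp S f (ident S Y) = f)"

definition is_restriction_category :: "('o, 'm, 'x) cat_data_scheme \<Rightarrow> bool" where
  "is_restriction_category S \<longleftrightarrow> is_category S \<and>
     (\<forall>X \<in> obj S. \<forall>Y \<in> obj S. \<forall>f \<in> hom S X Y.
        rest S f \<in> hom S X X \<and> comp S (rest S f) f = f) \<and>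
     (\<forall>X \<in> obj S. \<forall>Y \<in> obj S. \<forall>Z \<in> obj S. \<forall>f \<in> hom S X Y. \<forall>g \<in> hom S X Z.
        comp S (rest S f) (rest S g) = comp S (rest S g) (rest S f) \<and>
        rest S (comp S (rest S f) g) = comp S (rest S f) (rest S g)) \<and>
     (\<forall>X \<in> obj S. \<forall>Y \<in> obj S. \<forall>Z \<in> obj S. \<forall>f \<in> hom S X Y. \<forall>g \<in> hom S Y Z.
        comp S f (rest S g) = comp S (rest S (comp S f g)) f)"

definition has_restriction_products :: "('o, 'm, 'x) cat_data_scheme \<Rightarrow> bool" where
  "has_restriction_products S \<longleftrightarrow>
     one_obj S \<in> obj S \<and>
     (\<forall>X \<in> obj S. bang S X \<in> hom S X (one_obj S) \<and> total S (bang S X)) \<and>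
     (\<forall>X \<in> obj S. \<forall>f \<in> hom S X (one_obj S). f = comp S (rest S f) (bang S X)) \<and>
     (\<forall>X \<in> obj S. \<forall>Y \<in> obj S.
        prd S X Y \<in> obj S \<and>
        pr0 S X Y \<in> hom S (prd S X Y) X \<and> total S (pr0 S X Y) \<and>
        pr1 S X Y \<in> hom S (prd S X Y) Y \<and> total S (pr1 S X Y)) \<and>
     (\<forall>X \<in> obj S. \<forall>Y \<in> obj S. \<forall>Z \<in> obj S. \<forall>f \<in> hom S Z X. \<forall>g \<in> hom S Z Y.
        pair S f g \<in> hom S Z (prd S X Y) \<and>
        comp S (pair S f g) (pr0 S X Y) = comp S (rest S g) f \<and>
        comp S (pair S f g) (pr1 S X Y) = comp S (rest S f) g \<and>
        (\<forall>h \<in> hom S Z (prd S X Y).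
           comp S h (pr0 S X Y) = comp S (rest S g) f \<and>
           comp S h (pr1 S X Y) = comp S (rest S f) g \<longrightarrow> h = pair S f g))"

definition is_CLARC :: "('o, 'm, 'x) cat_data_scheme \<Rightarrow> bool" where
  "is_CLARC S \<longleftrightarrow> is_restriction_category S \<and> has_restriction_products S \<and>
     \<comment> \<open>commutative monoid structure on each hom-set\<close>
     (\<forall>X \<in> obj S. \<forall>Y \<in> obj S.
        zer S X Y \<in> hom S X Y \<and>
        (\<forall>f \<in> hom S X Y. \<forall>g \<in> hom S X Y. plus S f g \<in> hom S X Y) \<and>
        (\<forall>f \<in> hom S X Y. \<forall>g \<in> hom S X Y. \<forall>h \<in> hom S X Y.
           plus S (plus S f g) h = plus S f (plus S g h)) \<and>
        (\<forall>f \<in> hom S X Y. \<forall>g \<in> hom S X Y. plus S f g = plus S g f) \<and>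
        (\<forall>f \<in> hom S X Y. plus S f (zer S X Y) = f)) \<and>
     \<comment> \<open>restriction of sums and of zero\<close>
     (\<forall>X \<in> obj S. \<forall>Y \<in> obj S.
        (\<forall>f \<in> hom S X Y. \<forall>g \<in> hom S X Y.
           rest S (plus S f g) = comp S (rest S f) (rest S g)) \<and>
        rest S (zer S X Y) = ident S X) \<and>
     \<comment> \<open>left additivity\<close>
     (\<forall>X \<in> obj S. \<forall>Y \<in> obj S. \<forall>Z \<in> obj S. \<forall>x \<in> hom S Z X.
        (\<forall>f \<in> hom S X Y. \<forall>g \<in> hom S X Y.
           comp S x (plus S f g) = plus S (comp S x f) (comp S x g)) \<and>
        comp S x (zer S X Y) = comp S (rest S x) (zer S Z Y)) \<and>
     \<comment> \<open>projections are additive\<close>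
     (\<forall>X \<in> obj S. \<forall>Y \<in> obj S. \<forall>Z \<in> obj S.
        (\<forall>f \<in> hom S Z (prd S X Y). \<forall>g \<in> hom S Z (prd S X Y).
           comp S (plus S f g) (pr0 S X Y) = plus S (comp S f (pr0 S X Y)) (comp S g (pr0 S X Y)) \<and>
           comp S (plus S f g) (pr1 S X Y) = plus S (comp S f (pr1 S X Y)) (comp S g (pr1 S X Y))) \<and>
        comp S (zer S Z (prd S X Y)) (pr0 S X Y) = zer S Z X \<and>
        comp S (zer S Z (prd S X Y)) (pr1 S X Y) = zer S Z Y)"

definition is_RDRC :: "('o, 'm, 'x) cat_data_scheme \<Rightarrow> bool" where
  "is_RDRC S \<longleftrightarrow> is_CLARC S \<and>
     (\<forall>A \<in> obj S. \<forall>B \<in> obj S. \<forall>f \<in> hom S A B. rd S f \<in> hom S (prd S A B) A) \<and>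
     \<comment> \<open>RD.1\<close>
     (\<forall>A \<in> obj S. \<forall>B \<in> obj S.
        (\<forall>f \<in> hom S A B. \<forall>g \<in> hom S A B. rd S (plus S f g) = plus S (rd S f) (rd S g)) \<and>
        rd S (zer S A B) = zer S (prd S A B) A) \<and>
     \<comment> \<open>RD.2\<close>
     (\<forall>A \<in> obj S. \<forall>B \<in> obj S. \<forall>C \<in> obj S. \<forall>f \<in> hom S A B. \<forall>a \<in> hom S C A.
        (\<forall>b \<in> hom S C B. \<forall>c \<in> hom S C B.
           comp S (pair S a (plus S b c)) (rd S f)
             = plus S (comp S (pair S a b) (rd S f)) (comp S (pair S a c) (rd S f))) \<and>
        comp S (pair S a (zer S C B)) (rd S f) = comp S (rest S (comp S a f)) (zer S C A)) \<and>
     \<comment> \<open>RD.3\<close>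
     (\<forall>A \<in> obj S. \<forall>B \<in> obj S.
        rd S (pr0 S A B) = comp S (pr1 S (prd S A B) A) (iota0 S A B) \<and>
        rd S (pr1 S A B) = comp S (pr1 S (prd S A B) B) (iota1 S A B)) \<and>
     \<comment> \<open>RD.4\<close>
     (\<forall>A \<in> obj S. \<forall>B \<in> obj S. \<forall>C \<in> obj S. \<forall>f \<in> hom S C A. \<forall>g \<in> hom S C B.
        rd S (pair S f g) = plus S (comp S (ftimes S (ident S C) (pr0 S A B)) (rd S f))
                                   (comp S (ftimes S (ident S C) (pr1 S A B)) (rd S g))) \<and>
     \<comment> \<open>RD.5\<close>
     (\<forall>A \<in> obj S. \<forall>B \<in> obj S. \<forall>C \<in> obj S. \<forall>f \<in> hom S A B. \<forall>g \<in> hom S B C.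
        rd S (comp S f g) =
          comp S (pair S (pr0 S A C)
                         (comp S (pair S (comp S (pr0 S A C) f) (pr1 S A C)) (rd S g)))
                 (rd S f)) \<and>
     \<comment> \<open>RD.6\<close>
     (\<forall>A \<in> obj S. \<forall>B \<in> obj S. \<forall>f \<in> hom S A B.
        comp S (comp S (comp S
          (pair S (ftimes S (ident S A) (pr0 S B B)) (ftimes S (zer S A A) (pr1 S B B)))
          (ftimes S (iota0 S (prd S A B) A) (ident S (prd S A B))))
          (rd S (rd S (rd S f))))
          (pr1 S (prd S A B) A)
        = comp S (ftimes S (ident S A) (pr1 S B B)) (rd S f)) \<and>
     \<comment> \<open>RD.7\<close>
     (\<forall>A \<in> obj S. \<forall>B \<in> obj S. \<forall>f \<in> hom S A B.
        let g = comp S (comp S (ftimes S (iota0 S A B) (ident S A)) (rd S (rd S f))) (pr1 S A B);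
            ex = pair S (ftimes S (pr0 S A A) (pr0 S A A)) (ftimes S (pr1 S A A) (pr1 S A A));
            lhs = comp S (comp S (ftimes S (iota0 S (prd S A A) B) (ident S (prd S A A)))
                                 (rd S (rd S g)))
                         (pr1 S (prd S A A) B)
        in lhs = comp S ex lhs) \<and>
     \<comment> \<open>RD.8 and RD.9\<close>
     (\<forall>A \<in> obj S. \<forall>B \<in> obj S. \<forall>f \<in> hom S A B.
        rest S (rd S f) = ftimes S (rest S f) (ident S B) \<and>
        rd S (rest S f) = comp S (ftimes S (rest S f) (ident S A)) (pr1 S A A))"

definition is_DRC :: "('o, 'm, 'x) cat_data_scheme \<Rightarrow> ('m \<Rightarrow> 'm) \<Rightarrow> bool" where
  "is_DRC S D \<longleftrightarrow> is_CLARC S \<and>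
     (\<forall>A \<in> obj S. \<forall>B \<in> obj S. \<forall>f \<in> hom S A B. D f \<in> hom S (prd S A A) B) \<and>
     \<comment> \<open>DR.1\<close>
     (\<forall>A \<in> obj S. \<forall>B \<in> obj S.
        D (zer S A B) = zer S (prd S A A) B \<and>
        (\<forall>f \<in> hom S A B. \<forall>g \<in> hom S A B. D (plus S f g) = plus S (D f) (D g))) \<and>
     \<comment> \<open>DR.2\<close>
     (\<forall>A \<in> obj S. \<forall>B \<in> obj S. \<forall>C \<in> obj S. \<forall>f \<in> hom S A B. \<forall>a \<in> hom S C A.
        (\<forall>v \<in> hom S C A. \<forall>w \<in> hom S C A.
           comp S (pair S a (plus S v w)) (D f)
             = plus S (comp S (pair S a v) (D f)) (comp S (pair S a w) (D f))) \<and>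
        comp S (pair S a (zer S C A)) (D f) = comp S (rest S (comp S a f)) (zer S C B)) \<and>
     \<comment> \<open>DR.3\<close>
     (\<forall>A \<in> obj S. D (ident S A) = pr1 S A A) \<and>
     (\<forall>A \<in> obj S. \<forall>B \<in> obj S.
        D (pr0 S A B) = comp S (pr1 S (prd S A B) (prd S A B)) (pr0 S A B) \<and>
        D (pr1 S A B) = comp S (pr1 S (prd S A B) (prd S A B)) (pr1 S A B)) \<and>
     \<comment> \<open>DR.4\<close>
     (\<forall>A \<in> obj S. \<forall>B \<in> obj S. \<forall>C \<in> obj S. \<forall>f \<in> hom S C A. \<forall>g \<in> hom S C B.
        D (pair S f g) = pair S (D f) (D g)) \<and>
     \<comment> \<open>DR.5\<close>
     (\<forall>A \<in> obj S. \<forall>B \<in> obj S. \<forall>C \<in> obj S. \<forall>f \<in> hom S A B. \<forall>g \<in> hom S B C.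
        D (comp S f g) = comp S (pair S (comp S (pr0 S A A) f) (D f)) (D g)) \<and>
     \<comment> \<open>DR.6\<close>
     (\<forall>A \<in> obj S. \<forall>B \<in> obj S. \<forall>C \<in> obj S. \<forall>f \<in> hom S A B.
        \<forall>a \<in> hom S C A. \<forall>v \<in> hom S C A. \<forall>w \<in> hom S C A.
        comp S (pair S (pair S a v) (pair S (zer S C A) w)) (D (D f))
          = comp S (rest S v) (comp S (pair S a w) (D f))) \<and>
     \<comment> \<open>DR.7\<close>
     (\<forall>A \<in> obj S. \<forall>B \<in> obj S. \<forall>C \<in> obj S. \<forall>f \<in> hom S A B.
        \<forall>a \<in> hom S C A. \<forall>u \<in> hom S C A. \<forall>v \<in> hom S C A.
        comp S (pair S (pair S a v) (pair S u (zer S C A))) (D (D f))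
          = comp S (pair S (pair S a u) (pair S v (zer S C A))) (D (D f))) \<and>
     \<comment> \<open>DR.8 and DR.9\<close>
     (\<forall>A \<in> obj S. \<forall>B \<in> obj S. \<forall>f \<in> hom S A B.
        rest S (D f) = ftimes S (rest S f) (ident S A) \<and>
        D (rest S f) = comp S (ftimes S (rest S f) (ident S A)) (pr1 S A A))"

definition Dfromrd :: "('o, 'm, 'x) cat_data_scheme \<Rightarrow> 'm \<Rightarrow> 'm" where
  "Dfromrd S f =
     comp S (comp S (ftimes S (iota0 S (src S f) (tgt S f)) (ident S (src S f))) (rd S (rd S f)))
            (pr1 S (src S f) (tgt S f))"

end

theory Submission
  imports Defs
begin

(*
  The derivative is obtained by reversing twice: R[R[f]] : (A \<times> B) \<times> A \<rightarrow> A \<times> B is linear in its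
  last argument, and feeding it the point (a, 0) and projecting onto B transposes R[f] back.
  Each differential axiom is then a computation: unfold D, push the composite through R twice
  with the chain rule [RD.5], the pairing rule [RD.4] and the projections [RD.3], and simplify.
  Additivity [DR.1-2] comes from [RD.1-2], [DR.6] from [RD.6], the symmetry [DR.7] from [RD.7]
  (the exchange map swaps the middle components), and [DR.8-9] from [RD.8-9]. Since maps are
  partial, every step also carries restriction idempotents such as the restriction of
  \<pi>\<^sub>0 f g, and these are absorbed at the end of each computation.
*)

locale restriction_category =
  fixes S :: "('o, 'm, 'x) cat_data_scheme"
  assumes restriction_category: "is_restriction_category S"
begin

abbreviation cp (infixr "\<cdot>" 70) where "f \<cdot> g \<equiv> comp S f g"
abbreviation rs where "rs f \<equiv> rest S f"
abbreviation "I \<equiv> ident S"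

lemmas category_unfolded =
  restriction_category[unfolded is_restriction_category_def, THEN conjunct1, unfolded is_category_def]
lemmas restriction_category_unfolded =
  restriction_category[unfolded is_restriction_category_def, THEN conjunct2]

lemma hom_of_arr: "f \<in> arr S \<Longrightarrow> f \<in> hom S (src S f) (tgt S f)"
  by (simp add: hom_def)

lemma arr_src_obj [simp]: "f \<in> arr S \<Longrightarrow> src S f \<in> obj S"
  and arr_tgt_obj [simp]: "f \<in> arr S \<Longrightarrow> tgt S f \<in> obj S"
  using category_unfolded[THEN conjunct1] by blast+

lemma ident_type [simp]:
  "X \<in> obj S \<Longrightarrow> I X \<in> arr S"
  "X \<in> obj S \<Longrightarrow> src S (I X) = X"
  "X \<in> obj S \<Longrightarrow> tgt S (I X) = X"
  using category_unfolded[THEN conjunct2, THEN conjunct1] unfolding hom_def by blast+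

lemma comp_type [simp]:
  assumes "f \<in> arr S" "g \<in> arr S" "tgt S f = src S g"
  shows "f \<cdot> g \<in> arr S" "src S (f \<cdot> g) = src S f" "tgt S (f \<cdot> g) = tgt S g"
proof -
  have "f \<cdot> g \<in> hom S (src S f) (tgt S g)"
    using category_unfolded[THEN conjunct2, THEN conjunct2, THEN conjunct1, rule_format,
        of "src S f" "src S g" "tgt S g" f g] assms by (simp add: hom_def)
  then show "f \<cdot> g \<in> arr S" "src S (f \<cdot> g) = src S f" "tgt S (f \<cdot> g) = tgt S g"
    by (auto simp: hom_def)
qed

lemma comp_assoc [simp]:
  assumes "f \<in> arr S" "g \<in> arr S" "h \<in> arr S" "tgt S f = src S g" "tgt S g = src S h"
  shows "(f \<cdot> g) \<cdot> h = f \<cdot> g \<cdot> h"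
  using category_unfolded[THEN conjunct2, THEN conjunct2, THEN conjunct2, THEN conjunct1, rule_format,
        of "src S f" "src S g" "src S h" "tgt S h" f g h] assms by (simp add: hom_def)

lemma comp_ident_left [simp]: "f \<in> arr S \<Longrightarrow> X = src S f \<Longrightarrow> I X \<cdot> f = f"
  and comp_ident_right [simp]: "f \<in> arr S \<Longrightarrow> X = tgt S f \<Longrightarrow> f \<cdot> I X = f"
  using category_unfolded[THEN conjunct2, THEN conjunct2, THEN conjunct2, THEN conjunct2, rule_format,
        of "src S f" "tgt S f" f] hom_of_arr by simp_all

lemma rest_type [simp]:
  "f \<in> arr S \<Longrightarrow> rs f \<in> arr S"
  "f \<in> arr S \<Longrightarrow> src S (rs f) = src S f"
  "f \<in> arr S \<Longrightarrow> tgt S (rs f) = src S f"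
  using restriction_category_unfolded[THEN conjunct1, rule_format, of "src S f" "tgt S f" f] hom_of_arr
  by (auto simp: hom_def)

lemma rest_comp_self [simp]: "f \<in> arr S \<Longrightarrow> rs f \<cdot> f = f"
  using restriction_category_unfolded[THEN conjunct1, rule_format, of "src S f" "tgt S f" f] hom_of_arr
  by (auto simp: hom_def)

lemma rest_commute:
  "f \<in> arr S \<Longrightarrow> g \<in> arr S \<Longrightarrow> src S f = src S g \<Longrightarrow> rs f \<cdot> rs g = rs g \<cdot> rs f"
  using restriction_category_unfolded[THEN conjunct2, THEN conjunct1, rule_format,
      of "src S f" "tgt S f" "tgt S g" f g] hom_of_arr by (auto simp: hom_def)

lemma rest_rest_comp [simp]:
  "f \<in> arr S \<Longrightarrow> g \<in> arr S \<Longrightarrow> src S f = src S g \<Longrightarrow> rs (rs f \<cdot> g) = rs f \<cdot> rs g"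
  using restriction_category_unfolded[THEN conjunct2, THEN conjunct1, rule_format,
      of "src S f" "tgt S f" "tgt S g" f g] hom_of_arr by (auto simp: hom_def)

lemma comp_rest:
  "f \<in> arr S \<Longrightarrow> g \<in> arr S \<Longrightarrow> tgt S f = src S g \<Longrightarrow> f \<cdot> rs g = rs (f \<cdot> g) \<cdot> f"
  using restriction_category_unfolded[THEN conjunct2, THEN conjunct2, rule_format,
      of "src S f" "tgt S f" "tgt S g" f g] hom_of_arr by (auto simp: hom_def)

lemma rest_ident [simp]: "X \<in> obj S \<Longrightarrow> rs (I X) = I X"
  using rest_comp_self[of "I X"] comp_ident_right[of "rs (I X)" X] by simp

lemma rest_rest [simp]: "f \<in> arr S \<Longrightarrow> rs (rs f) = rs f"
  using rest_rest_comp[of f "I (src S f)"] by simp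

lemma rest_idem [simp]: "f \<in> arr S \<Longrightarrow> rs f \<cdot> rs f = rs f"
  using rest_comp_self[of "rs f"] by simp

lemma rest_idem_comp [simp]:
  "f \<in> arr S \<Longrightarrow> g \<in> arr S \<Longrightarrow> src S g = src S f \<Longrightarrow> rs f \<cdot> rs f \<cdot> g = rs f \<cdot> g"
  by (simp flip: comp_assoc)

lemma rest_comp_self_comp [simp]:
  "f \<in> arr S \<Longrightarrow> h \<in> arr S \<Longrightarrow> src S h = tgt S f \<Longrightarrow> rs f \<cdot> f \<cdot> h = f \<cdot> h"
  by (simp flip: comp_assoc)

lemma rest_comp_le [simp]:
  assumes "f \<in> arr S" "g \<in> arr S" "tgt S f = src S g"
  shows "rs f \<cdot> rs (f \<cdot> g) = rs (f \<cdot> g)" "rs (f \<cdot> g) \<cdot> rs f = rs (f \<cdot> g)"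
proof -
  have "rs (f \<cdot> g) = rs (rs f \<cdot> f \<cdot> g)" using assms by simp
  also have "\<dots> = rs f \<cdot> rs (f \<cdot> g)" by (rule rest_rest_comp) (use assms in simp_all)
  finally show le: "rs f \<cdot> rs (f \<cdot> g) = rs (f \<cdot> g)" by simp
  show "rs (f \<cdot> g) \<cdot> rs f = rs (f \<cdot> g)" using le rest_commute[of f "f \<cdot> g"] assms by simp
qed

lemma rest_comp_le_comp [simp]:
  assumes "f \<in> arr S" "g \<in> arr S" "tgt S f = src S g" "h \<in> arr S" "src S h = src S f"
  shows "rs (f \<cdot> g) \<cdot> rs f \<cdot> h = rs (f \<cdot> g) \<cdot> h" "rs f \<cdot> rs (f \<cdot> g) \<cdot> h = rs (f \<cdot> g) \<cdot> h"
  using assms rest_comp_le[of f g] by (simp_all flip: comp_assoc)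

lemma rest_comp_comp_le:
  assumes "f \<in> arr S" "g \<in> arr S" "h \<in> arr S" "tgt S f = src S g" "tgt S g = src S h"
  shows "rs (f \<cdot> g \<cdot> h) \<cdot> rs (f \<cdot> g) = rs (f \<cdot> g \<cdot> h)"
proof -
  have "rs ((f \<cdot> g) \<cdot> h) \<cdot> rs (f \<cdot> g) = rs ((f \<cdot> g) \<cdot> h)"
    by (rule rest_comp_le(2)) (use assms in simp_all)
  then show ?thesis unfolding comp_assoc[OF assms] .
qed

lemma rest_comp_rest [simp]:
  assumes "f \<in> arr S" "g \<in> arr S" "tgt S f = src S g"
  shows "rs (f \<cdot> rs g) = rs (f \<cdot> g)"
proof -
  have "rs (f \<cdot> rs g) = rs (rs (f \<cdot> g) \<cdot> f)" by (simp only: comp_rest[OF assms])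
  also have "\<dots> = rs (f \<cdot> g) \<cdot> rs f" using assms by simp
  finally show ?thesis using assms by simp
qed

lemma rest_comp_comp_rest [simp]:
  assumes "f \<in> arr S" "g \<in> arr S" "tgt S f = src S g" "x \<in> arr S" "tgt S x = src S f"
  shows "rs (x \<cdot> f \<cdot> rs g) = rs (x \<cdot> f \<cdot> g)"
  using rest_comp_rest[of "x \<cdot> f" g] assms by (simp flip: comp_assoc)

lemma rest_comp_total [simp]:
  assumes "f \<in> arr S" "g \<in> arr S" "tgt S f = src S g" "rs g = I (src S g)"
  shows "rs (f \<cdot> g) = rs f"
  using rest_comp_rest[OF assms(1-3)] assms by simp

lemma total_comp [simp]:
  assumes "f \<in> arr S" "g \<in> arr S" "tgt S f = src S g" "rs g = I (src S g)" "rs f = I (src S f)"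
  shows "rs (f \<cdot> g) = I (src S f)"
  using rest_comp_total[OF assms(1-4)] assms by simp

lemma rest_comp_comp_total [simp]:
  assumes "f \<in> arr S" "g \<in> arr S" "tgt S f = src S g" "h \<in> arr S" "tgt S g = src S h"
    "rs h = I (src S h)"
  shows "rs (f \<cdot> g \<cdot> h) = rs (f \<cdot> g)"
  using rest_comp_total[of "f \<cdot> g" h] assms by (simp flip: comp_assoc)

lemma rest_commute_comp:
  assumes "f \<in> arr S" "g \<in> arr S" "src S f = src S g" "h \<in> arr S" "src S h = src S f"
  shows "rs f \<cdot> rs g \<cdot> h = rs g \<cdot> rs f \<cdot> h"
  using assms by (simp add: rest_commute flip: comp_assoc)

lemmas rest_commute_simps = rest_commute_comp rest_commute

lemma comp_rest_comp:
  assumes "f \<in> arr S" "g \<in> arr S" "tgt S f = src S g" "h \<in> arr S" "src S h = src S g"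
  shows "f \<cdot> rs g \<cdot> h = rs (f \<cdot> g) \<cdot> f \<cdot> h"
  using assms by (simp add: comp_rest flip: comp_assoc)

lemma rest_absorb [simp]:
  assumes "f \<in> arr S" "g \<in> arr S" "src S f = src S g"
  shows "rs f \<cdot> rs g \<cdot> f = rs g \<cdot> f"
  using assms rest_commute_comp[of f g f] by simp

lemma rest_absorb_comp [simp]:
  assumes "f \<in> arr S" "g \<in> arr S" "src S f = src S g" "h \<in> arr S" "src S h = tgt S f"
  shows "rs f \<cdot> rs g \<cdot> f \<cdot> h = rs g \<cdot> f \<cdot> h"
  using assms rest_absorb[of f g] by (simp flip: comp_assoc)

lemma rest_comp_eq_of_le:
  assumes "e \<in> arr S" "y \<in> arr S" "src S e = src S y" "rs e \<cdot> rs y = rs y"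
  shows "rs e \<cdot> y = y"
proof -
  have "rs e \<cdot> y = rs e \<cdot> rs y \<cdot> y" using assms by simp
  also have "\<dots> = (rs e \<cdot> rs y) \<cdot> y" by (rule comp_assoc[symmetric]) (use assms in simp_all)
  also have "\<dots> = y" unfolding assms(4) using assms by simp
  finally show ?thesis .
qed

end

locale restriction_products = restriction_category +
  assumes restriction_products: "has_restriction_products S"
begin

abbreviation pa ("\<langle>_,/ _\<rangle>") where "\<langle>f, g\<rangle> \<equiv> pair S f g"
abbreviation "p0 \<equiv> pr0 S"
abbreviation "p1 \<equiv> pr1 S"
abbreviation "pp \<equiv> prd S"

lemmas restriction_products_unfolded = restriction_products[unfolded has_restriction_products_def]

lemma prd_obj[simp]: "X \<in> obj S \<Longrightarrow> Y \<in> obj S \<Longrightarrow> prd S X Y \<in> obj S"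
  using restriction_products_unfolded[THEN conjunct2, THEN conjunct2, THEN conjunct2, THEN conjunct1] by blast

lemma pr_type[simp]:
  "X \<in> obj S \<Longrightarrow> Y \<in> obj S \<Longrightarrow> pr0 S X Y \<in> arr S"
  "X \<in> obj S \<Longrightarrow> Y \<in> obj S \<Longrightarrow> src S (pr0 S X Y) = prd S X Y"
  "X \<in> obj S \<Longrightarrow> Y \<in> obj S \<Longrightarrow> tgt S (pr0 S X Y) = X"
  "X \<in> obj S \<Longrightarrow> Y \<in> obj S \<Longrightarrow> pr1 S X Y \<in> arr S"
  "X \<in> obj S \<Longrightarrow> Y \<in> obj S \<Longrightarrow> src S (pr1 S X Y) = prd S X Y"
  "X \<in> obj S \<Longrightarrow> Y \<in> obj S \<Longrightarrow> tgt S (pr1 S X Y) = Y"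
  using restriction_products_unfolded[THEN conjunct2, THEN conjunct2, THEN conjunct2, THEN conjunct1, rule_format, of X Y]
  by (auto simp: hom_def)

lemma pr_total[simp]:
  "X \<in> obj S \<Longrightarrow> Y \<in> obj S \<Longrightarrow> rest S (pr0 S X Y) = ident S (prd S X Y)"
  "X \<in> obj S \<Longrightarrow> Y \<in> obj S \<Longrightarrow> rest S (pr1 S X Y) = ident S (prd S X Y)"
  using restriction_products_unfolded[THEN conjunct2, THEN conjunct2, THEN conjunct2, THEN conjunct1, rule_format, of X Y]
  by (auto simp: hom_def total_def)

lemmas pair_axioms = restriction_products_unfolded[THEN conjunct2, THEN conjunct2, THEN conjunct2, THEN conjunct2, rule_format]

lemma pair_type[simp]:
  assumes "f \<in> arr S" "g \<in> arr S" "src S f = src S g"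
  shows "pair S f g \<in> arr S" "src S (pair S f g) = src S f"
    "tgt S (pair S f g) = prd S (tgt S f) (tgt S g)"
  using pair_axioms[of "tgt S f" "tgt S g" "src S f" f g] assms by (auto simp: hom_def)

lemma pair_pr0[simp]:
  assumes "f \<in> arr S" "g \<in> arr S" "src S f = src S g" "X = tgt S f" "Y = tgt S g"
  shows "comp S (pair S f g) (pr0 S X Y) = comp S (rest S g) f"
  using pair_axioms[of "tgt S f" "tgt S g" "src S f" f g] assms by (auto simp: hom_def)

lemma pair_pr1[simp]:
  assumes "f \<in> arr S" "g \<in> arr S" "src S f = src S g" "X = tgt S f" "Y = tgt S g"
  shows "comp S (pair S f g) (pr1 S X Y) = comp S (rest S f) g"
  using pair_axioms[of "tgt S f" "tgt S g" "src S f" f g] assms by (auto simp: hom_def)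

lemma pair_uniq:
  assumes "f \<in> arr S" "g \<in> arr S" "src S f = src S g" "h \<in> arr S" "src S h = src S f"
    "tgt S h = prd S (tgt S f) (tgt S g)"
    "comp S h (pr0 S (tgt S f) (tgt S g)) = comp S (rest S g) f"
    "comp S h (pr1 S (tgt S f) (tgt S g)) = comp S (rest S f) g"
  shows "h = pair S f g"
  using pair_axioms[of "tgt S f" "tgt S g" "src S f" f g] assms by (auto simp: hom_def)

lemma rest_pair[simp]:
  assumes "f \<in> arr S" "g \<in> arr S" "src S f = src S g"
  shows "rs \<langle>f, g\<rangle> = rs g \<cdot> rs f"
proof -
  have "rs \<langle>f, g\<rangle> = rs (\<langle>f, g\<rangle> \<cdot> p0 (tgt S f) (tgt S g))"
    by (rule rest_comp_total[symmetric]) (use assms in simp_all)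
  also have "\<dots> = rs (rs g \<cdot> f)" using assms by simp
  also have "\<dots> = rs g \<cdot> rs f" using assms by simp
  finally show ?thesis .
qed

lemma pair_eq:
  assumes "f \<in> arr S" "g \<in> arr S" "src S f = src S g" "f' \<in> arr S" "g' \<in> arr S"
   "src S f' = src S f" "src S g' = src S f" "tgt S f' = tgt S f" "tgt S g' = tgt S g"
   "rs g \<cdot> f = rs g' \<cdot> f'" "rs f \<cdot> g = rs f' \<cdot> g'"
  shows "\<langle>f, g\<rangle> = \<langle>f', g'\<rangle>"
  by (rule pair_uniq) (use assms in simp_all)

lemma comp_pair:
  assumes "x \<in> arr S" "f \<in> arr S" "g \<in> arr S" "src S f = src S g" "tgt S x = src S f"
  shows "x \<cdot> \<langle>f, g\<rangle> = \<langle>x \<cdot> f, x \<cdot> g\<rangle>"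
proof (rule pair_uniq)
  show "(x \<cdot> \<langle>f, g\<rangle>) \<cdot> p0 (tgt S (x \<cdot> f)) (tgt S (x \<cdot> g)) = rs (x \<cdot> g) \<cdot> x \<cdot> f"
    using assms by (simp add: comp_assoc comp_rest_comp)
  show "(x \<cdot> \<langle>f, g\<rangle>) \<cdot> p1 (tgt S (x \<cdot> f)) (tgt S (x \<cdot> g)) = rs (x \<cdot> f) \<cdot> x \<cdot> g"
    using assms by (simp add: comp_assoc comp_rest_comp)
qed (use assms in simp_all)

lemma pair_pr0_pr1[simp]: "X \<in> obj S \<Longrightarrow> Y \<in> obj S \<Longrightarrow> \<langle>p0 X Y, p1 X Y\<rangle> = I (pp X Y)"
  by (rule pair_uniq[symmetric]) simp_all

lemma pair_pr0_comp[simp]: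
  assumes "f \<in> arr S" "g \<in> arr S" "src S f = src S g" "X = tgt S f" "Y = tgt S g"
    "h \<in> arr S" "src S h = X"
  shows "\<langle>f, g\<rangle> \<cdot> p0 X Y \<cdot> h = rs g \<cdot> f \<cdot> h"
  using assms by (simp flip: comp_assoc)

lemma pair_pr1_comp[simp]:
  assumes "f \<in> arr S" "g \<in> arr S" "src S f = src S g" "X = tgt S f" "Y = tgt S g"
    "h \<in> arr S" "src S h = Y"
  shows "\<langle>f, g\<rangle> \<cdot> p1 X Y \<cdot> h = rs f \<cdot> g \<cdot> h"
  using assms by (simp flip: comp_assoc)

lemma ftimes_type[simp]:
  assumes "f \<in> arr S" "g \<in> arr S"
  shows "ftimes S f g \<in> arr S" "src S (ftimes S f g) = pp (src S f) (src S g)"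
    "tgt S (ftimes S f g) = pp (tgt S f) (tgt S g)"
  using assms by (simp_all add: ftimes_def)

lemma pair_ftimes:
  assumes "a \<in> arr S" "b \<in> arr S" "src S a = src S b" "h \<in> arr S" "k \<in> arr S"
    "tgt S a = src S h" "tgt S b = src S k"
  shows "\<langle>a, b\<rangle> \<cdot> ftimes S h k = \<langle>a \<cdot> h, b \<cdot> k\<rangle>"
proof -
  have "\<langle>a, b\<rangle> \<cdot> ftimes S h k = \<langle>rs b \<cdot> a \<cdot> h, rs a \<cdot> b \<cdot> k\<rangle>"
    unfolding ftimes_def using assms by (simp add: comp_pair)
  also have "\<dots> = \<langle>a \<cdot> h, b \<cdot> k\<rangle>"
  proof (rule pair_eq)
    show "rs (rs a \<cdot> b \<cdot> k) \<cdot> rs b \<cdot> a \<cdot> h = rs (b \<cdot> k) \<cdot> a \<cdot> h"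
      using assms rest_commute_comp[of a "b \<cdot> k"] rest_commute_comp[of a b] by simp
    show "rs (rs b \<cdot> a \<cdot> h) \<cdot> rs a \<cdot> b \<cdot> k = rs (a \<cdot> h) \<cdot> b \<cdot> k"
      using assms rest_commute_comp[of b "a \<cdot> h"] rest_commute_comp[of b a] by simp
  qed (use assms in simp_all)
  finally show ?thesis .
qed

lemma comp_pair_comp:
  assumes "x \<in> arr S" "f \<in> arr S" "g \<in> arr S" "src S f = src S g" "tgt S x = src S f"
    "h \<in> arr S" "src S h = pp (tgt S f) (tgt S g)"
  shows "x \<cdot> \<langle>f, g\<rangle> \<cdot> h = \<langle>x \<cdot> f, x \<cdot> g\<rangle> \<cdot> h"
  using assms comp_pair[of x f g] by (simp flip: comp_assoc)

lemma pair_ftimes_comp: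
  assumes "a \<in> arr S" "b \<in> arr S" "src S a = src S b" "h \<in> arr S" "k \<in> arr S"
    "tgt S a = src S h" "tgt S b = src S k" "x \<in> arr S" "src S x = pp (tgt S h) (tgt S k)"
  shows "\<langle>a, b\<rangle> \<cdot> ftimes S h k \<cdot> x = \<langle>a \<cdot> h, b \<cdot> k\<rangle> \<cdot> x"
  using assms pair_ftimes[of a b h k] by (simp flip: comp_assoc)

lemma rest_ftimes[simp]:
  assumes "h \<in> arr S" "k \<in> arr S"
  shows "rs (ftimes S h k) = rs (p1 (src S h) (src S k) \<cdot> k) \<cdot> rs (p0 (src S h) (src S k) \<cdot> h)"
  using assms by (simp add: ftimes_def)

lemma ftimes_pr[simp]:
  assumes "h \<in> arr S" "k \<in> arr S" "X = tgt S h" "Y = tgt S k"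
  shows "ftimes S h k \<cdot> p0 X Y = rs (p1 (src S h) (src S k) \<cdot> k) \<cdot> p0 (src S h) (src S k) \<cdot> h"
    "ftimes S h k \<cdot> p1 X Y = rs (p0 (src S h) (src S k) \<cdot> h) \<cdot> p1 (src S h) (src S k) \<cdot> k"
  using assms by (simp_all add: ftimes_def)

lemma ftimes_pr_comp[simp]:
  assumes "h \<in> arr S" "k \<in> arr S" "X = tgt S h" "Y = tgt S k" "x \<in> arr S"
  shows "src S x = X \<Longrightarrow> ftimes S h k \<cdot> p0 X Y \<cdot> x = rs (p1 (src S h) (src S k) \<cdot> k) \<cdot> p0 (src S h) (src S k) \<cdot> h \<cdot> x"
    "src S x = Y \<Longrightarrow> ftimes S h k \<cdot> p1 X Y \<cdot> x = rs (p0 (src S h) (src S k) \<cdot> h) \<cdot> p1 (src S h) (src S k) \<cdot> k \<cdot> x"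
  using assms by (simp_all add: ftimes_def flip: comp_assoc)

lemma ftimes_ident[simp]: "X \<in> obj S \<Longrightarrow> Y \<in> obj S \<Longrightarrow> ftimes S (I X) (I Y) = I (pp X Y)"
  by (simp add: ftimes_def)

lemma pair_rest_right:
  assumes "a \<in> arr S" "b \<in> arr S" "e \<in> arr S" "src S b = src S a" "src S e = src S a"
  shows "\<langle>a, rs e \<cdot> b\<rangle> = rs e \<cdot> \<langle>a, b\<rangle>"
proof -
  have "\<langle>a, rs e \<cdot> b\<rangle> = \<langle>rs e \<cdot> a, rs e \<cdot> b\<rangle>"
    by (rule pair_eq) (use assms in \<open>simp_all add: rest_commute_simps\<close>)
  also have "\<dots> = rs e \<cdot> \<langle>a, b\<rangle>" using assms by (simp add: comp_pair)
  finally show ?thesis .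
qed

lemma pair_rest_left:
  assumes "a \<in> arr S" "b \<in> arr S" "e \<in> arr S" "src S b = src S a" "src S e = src S a"
  shows "\<langle>rs e \<cdot> a, b\<rangle> = rs e \<cdot> \<langle>a, b\<rangle>"
proof -
  have "\<langle>rs e \<cdot> a, b\<rangle> = \<langle>rs e \<cdot> a, rs e \<cdot> b\<rangle>"
    by (rule pair_eq) (use assms in \<open>simp_all add: rest_commute_simps\<close>)
  also have "\<dots> = rs e \<cdot> \<langle>a, b\<rangle>" using assms by (simp add: comp_pair)
  finally show ?thesis .
qed

lemma ftimes_rest_ident:
  assumes "f \<in> arr S" "Y \<in> obj S"
  shows "ftimes S (rs f) (I Y) = rs (p0 (src S f) Y \<cdot> f)"
proof -
  have "rs (p0 (src S f) Y \<cdot> f) = \<langle>p0 (src S f) Y \<cdot> rs f, p1 (src S f) Y\<rangle>"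
  proof (rule pair_uniq)
    have "rs (p0 (src S f) Y \<cdot> f) \<cdot> p0 (src S f) Y = p0 (src S f) Y \<cdot> rs f"
      using assms comp_rest[of "p0 (src S f) Y" f] by simp
    then show "rs (p0 (src S f) Y \<cdot> f) \<cdot> p0 (tgt S (p0 (src S f) Y \<cdot> rs f)) (tgt S (p1 (src S f) Y)) =
      rs (p1 (src S f) Y) \<cdot> p0 (src S f) Y \<cdot> rs f" using assms by simp
  qed (use assms in simp_all)
  then show ?thesis using assms by (simp add: ftimes_def)
qed

abbreviation ex where "ex A \<equiv> \<langle>ftimes S (p0 A A) (p0 A A), ftimes S (p1 A A) (p1 A A)\<rangle>"

lemma pair_pair_comp_ex:
  assumes "a \<in> arr S" "u \<in> arr S" "v \<in> arr S" "w \<in> arr S" "src S u = src S a" "src S v = src S a"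
    "src S w = src S a" "tgt S a = A" "tgt S u = A" "tgt S v = A" "tgt S w = A" "A \<in> obj S"
  shows "\<langle>\<langle>a, v\<rangle>, \<langle>u, w\<rangle>\<rangle> \<cdot> ex A = \<langle>\<langle>a, u\<rangle>, \<langle>v, w\<rangle>\<rangle>"
proof (rule pair_uniq)
  have "(\<langle>\<langle>a, v\<rangle>, \<langle>u, w\<rangle>\<rangle> \<cdot> ex A) \<cdot> p0 (pp A A) (pp A A) = \<langle>rs v \<cdot> a, rs w \<cdot> u\<rangle>"
    using assms by (simp add: pair_ftimes_comp pair_ftimes)
  also have "\<dots> = \<langle>rs w \<cdot> rs v \<cdot> a, rs w \<cdot> rs v \<cdot> u\<rangle>"
    by (rule pair_eq) (use assms in \<open>simp_all add: rest_commute_simps\<close>)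
  also have "\<dots> = rs \<langle>v, w\<rangle> \<cdot> \<langle>a, u\<rangle>"
    using assms by (simp add: comp_pair)
  finally show "(\<langle>\<langle>a, v\<rangle>, \<langle>u, w\<rangle>\<rangle> \<cdot> ex A) \<cdot> p0 (tgt S \<langle>a, u\<rangle>) (tgt S \<langle>v, w\<rangle>) = rs \<langle>v, w\<rangle> \<cdot> \<langle>a, u\<rangle>"
    using assms by simp
  have "(\<langle>\<langle>a, v\<rangle>, \<langle>u, w\<rangle>\<rangle> \<cdot> ex A) \<cdot> p1 (pp A A) (pp A A) = \<langle>rs a \<cdot> v, rs u \<cdot> w\<rangle>"
    using assms by (simp add: pair_ftimes_comp pair_ftimes)
  also have "\<dots> = \<langle>rs u \<cdot> rs a \<cdot> v, rs u \<cdot> rs a \<cdot> w\<rangle>"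
    by (rule pair_eq) (use assms in \<open>simp_all add: rest_commute_simps\<close>)
  also have "\<dots> = rs \<langle>a, u\<rangle> \<cdot> \<langle>v, w\<rangle>"
    using assms by (simp add: comp_pair)
  finally show "(\<langle>\<langle>a, v\<rangle>, \<langle>u, w\<rangle>\<rangle> \<cdot> ex A) \<cdot> p1 (tgt S \<langle>a, u\<rangle>) (tgt S \<langle>v, w\<rangle>) = rs \<langle>a, u\<rangle> \<cdot> \<langle>v, w\<rangle>"
    using assms by simp
qed (use assms in simp_all)

end

locale cartesian_left_additive =
  fixes S :: "('o, 'm, 'x) cat_data_scheme"
  assumes CLARC: "is_CLARC S"

sublocale cartesian_left_additive \<subseteq> restriction_products
  using CLARC by unfold_locales (simp_all add: is_CLARC_def)

context cartesian_left_additive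
begin

abbreviation pl (infixl "\<oplus>" 65) where "f \<oplus> g \<equiv> plus S f g"
abbreviation "Z \<equiv> zer S"

lemmas CLARC_unfolded = CLARC[unfolded is_CLARC_def]
lemmas monoid_axioms = CLARC_unfolded[THEN conjunct2, THEN conjunct2, THEN conjunct1, rule_format]

lemmas rest_plus_axioms = CLARC_unfolded[THEN conjunct2, THEN conjunct2, THEN conjunct2, THEN conjunct1, rule_format]

lemmas left_additive_axioms = CLARC_unfolded[THEN conjunct2, THEN conjunct2, THEN conjunct2, THEN conjunct2, THEN conjunct1, rule_format]

lemmas pr_additive_axioms = CLARC_unfolded[THEN conjunct2, THEN conjunct2, THEN conjunct2, THEN conjunct2, THEN conjunct2, rule_format]

lemma zer_type[simp]:
  "X \<in> obj S \<Longrightarrow> Y \<in> obj S \<Longrightarrow> zer S X Y \<in> arr S"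
  "X \<in> obj S \<Longrightarrow> Y \<in> obj S \<Longrightarrow> src S (zer S X Y) = X"
  "X \<in> obj S \<Longrightarrow> Y \<in> obj S \<Longrightarrow> tgt S (zer S X Y) = Y"
  using monoid_axioms[of X Y] by (auto simp: hom_def)

lemma plus_type[simp]:
  assumes "f \<in> arr S" "g \<in> arr S" "src S f = src S g" "tgt S f = tgt S g"
  shows "plus S f g \<in> arr S" "src S (plus S f g) = src S f" "tgt S (plus S f g) = tgt S f"
  using monoid_axioms[of "src S f" "tgt S f"] assms by (auto simp: hom_def)

lemma plus_comm:
  assumes "f \<in> arr S" "g \<in> arr S" "src S f = src S g" "tgt S f = tgt S g"
  shows "plus S f g = plus S g f"
  using monoid_axioms[of "src S f" "tgt S f"] assms by (auto simp: hom_def)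

lemma plus_zero[simp]:
  assumes "f \<in> arr S" "X = src S f" "Y = tgt S f"
  shows "plus S f (zer S X Y) = f"
  using monoid_axioms[of "src S f" "tgt S f"] assms by (auto simp: hom_def)

lemma zero_plus[simp]:
  assumes "f \<in> arr S" "X = src S f" "Y = tgt S f"
  shows "plus S (zer S X Y) f = f"
proof -
  have "plus S (zer S X Y) f = plus S f (zer S X Y)"
    by (rule plus_comm) (use assms in simp_all)
  then show ?thesis using assms by simp
qed

lemma rest_plus [simp]:
  assumes "f \<in> arr S" "g \<in> arr S" "src S f = src S g" "tgt S f = tgt S g"
  shows "rest S (plus S f g) = comp S (rest S f) (rest S g)"
  using rest_plus_axioms[of "src S f" "tgt S f"] assms by (auto simp: hom_def)

lemma rest_zer[simp]: "X \<in> obj S \<Longrightarrow> Y \<in> obj S \<Longrightarrow> rest S (zer S X Y) = ident S X"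
  using rest_plus_axioms[of X Y] by auto

lemma comp_plus [simp]:
  assumes "x \<in> arr S" "f \<in> arr S" "g \<in> arr S" "src S f = src S g" "tgt S f = tgt S g"
    "tgt S x = src S f"
  shows "comp S x (plus S f g) = plus S (comp S x f) (comp S x g)"
  using left_additive_axioms[of "src S f" "tgt S f" "src S x" x] assms by (auto simp: hom_def)

lemma comp_zer:
  assumes "x \<in> arr S" "tgt S x = X" "Y \<in> obj S"
  shows "comp S x (zer S X Y) = comp S (rest S x) (zer S (src S x) Y)"
  using left_additive_axioms[of X Y "src S x" x] assms by (auto simp: hom_def)

lemma plus_pr:
  assumes "f \<in> arr S" "g \<in> arr S" "src S f = src S g" "tgt S f = prd S X Y" "tgt S g = prd S X Y"
    "X \<in> obj S" "Y \<in> obj S"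
  shows "comp S (plus S f g) (pr0 S X Y) = plus S (comp S f (pr0 S X Y)) (comp S g (pr0 S X Y))"
    "comp S (plus S f g) (pr1 S X Y) = plus S (comp S f (pr1 S X Y)) (comp S g (pr1 S X Y))"
  using pr_additive_axioms[of X Y "src S f"] assms by (auto simp: hom_def)

lemma zer_pr[simp]:
  assumes "X \<in> obj S" "Y \<in> obj S" "W \<in> obj S"
  shows "comp S (zer S W (prd S X Y)) (pr0 S X Y) = zer S W X"
    "comp S (zer S W (prd S X Y)) (pr1 S X Y) = zer S W Y"
  using pr_additive_axioms[of X Y W] assms by (auto simp: hom_def)

lemma iota_type[simp]:
  assumes "X \<in> obj S" "Y \<in> obj S"
  shows "iota0 S X Y \<in> arr S" "src S (iota0 S X Y) = X" "tgt S (iota0 S X Y) = pp X Y"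
    "iota1 S X Y \<in> arr S" "src S (iota1 S X Y) = Y" "tgt S (iota1 S X Y) = pp X Y"
  using assms by (simp_all add: iota0_def iota1_def)

lemma iota_total[simp]:
  assumes "X \<in> obj S" "Y \<in> obj S"
  shows "rs (iota0 S X Y) = I X" "rs (iota1 S X Y) = I Y"
  using assms by (simp_all add: iota0_def iota1_def)

lemma iota_pr[simp]:
  assumes "X \<in> obj S" "Y \<in> obj S"
  shows "iota0 S X Y \<cdot> p0 X Y = I X" "iota0 S X Y \<cdot> p1 X Y = Z X Y"
    "iota1 S X Y \<cdot> p0 X Y = Z Y X" "iota1 S X Y \<cdot> p1 X Y = I Y"
  using assms by (simp_all add: iota0_def iota1_def)

lemma iota_pr_comp[simp]:
  assumes "X \<in> obj S" "Y \<in> obj S" "h \<in> arr S"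
  shows "src S h = X \<Longrightarrow> iota0 S X Y \<cdot> p0 X Y \<cdot> h = h" "src S h = Y \<Longrightarrow> iota0 S X Y \<cdot> p1 X Y \<cdot> h = Z X Y \<cdot> h"
    "src S h = X \<Longrightarrow> iota1 S X Y \<cdot> p0 X Y \<cdot> h = Z Y X \<cdot> h" "src S h = Y \<Longrightarrow> iota1 S X Y \<cdot> p1 X Y \<cdot> h = h"
  using assms by (simp_all flip: comp_assoc)

lemma total_comp_zer[simp]:
  assumes "x \<in> arr S" "tgt S x = X" "Y \<in> obj S" "rs x = I (src S x)" "W = src S x"
  shows "x \<cdot> Z X Y = Z W Y"
proof -
  have "x \<cdot> Z X Y = rs x \<cdot> Z (src S x) Y" by (rule comp_zer) (use assms in auto)
  then show ?thesis using assms by simp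
qed

lemma zer_pair[simp]:
  assumes "X \<in> obj S" "Y \<in> obj S" "W \<in> obj S"
  shows "\<langle>Z X Y, Z X W\<rangle> = Z X (pp Y W)"
  by (rule pair_uniq[symmetric]) (use assms in simp_all)

lemma zer_pr_comp[simp]:
  assumes "X \<in> obj S" "Y \<in> obj S" "Z' \<in> obj S" "h \<in> arr S"
  shows "src S h = X \<Longrightarrow> Z Z' (pp X Y) \<cdot> p0 X Y \<cdot> h = Z Z' X \<cdot> h"
    "src S h = Y \<Longrightarrow> Z Z' (pp X Y) \<cdot> p1 X Y \<cdot> h = Z Z' Y \<cdot> h"
  using assms by (simp_all flip: comp_assoc)

lemma comp_iota0:
  assumes "a \<in> arr S" "tgt S a = X" "Y \<in> obj S" "X \<in> obj S"
  shows "a \<cdot> iota0 S X Y = \<langle>a, Z (src S a) Y\<rangle>"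
proof -
  have "a \<cdot> iota0 S X Y = \<langle>a \<cdot> I X, a \<cdot> Z X Y\<rangle>"
    unfolding iota0_def using assms by (simp add: comp_pair)
  also have "\<dots> = \<langle>a, Z (src S a) Y\<rangle>"
    by (rule pair_eq) (use assms comp_zer[of a] in \<open>simp_all\<close>)
  finally show ?thesis .
qed

lemma comp_iota1:
  assumes "a \<in> arr S" "tgt S a = Y" "X \<in> obj S" "Y \<in> obj S"
  shows "a \<cdot> iota1 S X Y = \<langle>Z (src S a) X, a\<rangle>"
proof -
  have "a \<cdot> iota1 S X Y = \<langle>a \<cdot> Z Y X, a \<cdot> I Y\<rangle>"
    unfolding iota1_def using assms by (simp add: comp_pair)
  also have "\<dots> = \<langle>Z (src S a) X, a\<rangle>"
    by (rule pair_eq) (use assms comp_zer[of a] in \<open>simp_all\<close>)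
  finally show ?thesis .
qed

lemma plus_restrict:
  assumes "f \<in> arr S" "g \<in> arr S" "src S f = src S g" "tgt S f = tgt S g"
  shows "f \<oplus> g = rs g \<cdot> f \<oplus> rs f \<cdot> g"
proof -
  have "f \<oplus> g = rs (f \<oplus> g) \<cdot> (f \<oplus> g)" by (rule rest_comp_self[symmetric]) (use assms in simp)
  also have "\<dots> = rs g \<cdot> f \<oplus> rs f \<cdot> g" using assms by (simp add: rest_absorb)
  finally show ?thesis .
qed

lemma plus_rest_zer_self:
  assumes "w \<in> arr S"
  shows "w \<oplus> rs w \<cdot> Z (src S w) (tgt S w) = w"
proof -
  have "rs w \<cdot> (w \<oplus> Z (src S w) (tgt S w)) = rs w \<cdot> w \<oplus> rs w \<cdot> Z (src S w) (tgt S w)"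
    by (rule comp_plus) (use assms in simp_all)
  moreover have "rs w \<cdot> (w \<oplus> Z (src S w) (tgt S w)) = w"
    using assms by simp
  ultimately show ?thesis using assms by simp
qed

lemma plus_rest_zer[simp]:
  assumes "x \<in> arr S" "e \<in> arr S" "src S e = src S x" "X = src S x" "Y = tgt S x"
  shows "x \<oplus> rs e \<cdot> Z X Y = rs e \<cdot> x" "rs e \<cdot> Z X Y \<oplus> x = rs e \<cdot> x"
proof -
  have "x \<oplus> rs e \<cdot> Z X Y = rs (rs e \<cdot> Z X Y) \<cdot> x \<oplus> rs x \<cdot> rs e \<cdot> Z X Y"
    by (subst plus_restrict) (use assms in simp_all)
  also have "\<dots> = rs e \<cdot> x \<oplus> rs (rs e \<cdot> x) \<cdot> Z (src S (rs e \<cdot> x)) (tgt S (rs e \<cdot> x))"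
    using assms by (simp add: rest_commute_simps)
  also have "\<dots> = rs e \<cdot> x" by (rule plus_rest_zer_self) (use assms in simp)
  finally show "x \<oplus> rs e \<cdot> Z X Y = rs e \<cdot> x" .
  moreover have "rs e \<cdot> Z X Y \<oplus> x = x \<oplus> rs e \<cdot> Z X Y" by (rule plus_comm) (use assms in simp_all)
  ultimately show "rs e \<cdot> Z X Y \<oplus> x = rs e \<cdot> x" by simp
qed

lemma rest_comp_plus_rest_comp:
  assumes "a \<in> arr S" "b \<in> arr S" "c \<in> arr S" "d \<in> arr S" "src S b = src S a"
    "src S c = src S a" "src S d = src S a" "tgt S c = tgt S a"
  shows "rs b \<cdot> a \<oplus> rs d \<cdot> c = rs b \<cdot> rs d \<cdot> (a \<oplus> c)"
proof -
  have "rs b \<cdot> a \<oplus> rs d \<cdot> c = rs (rs d \<cdot> c) \<cdot> rs b \<cdot> a \<oplus> rs (rs b \<cdot> a) \<cdot> rs d \<cdot> c"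
    by (rule plus_restrict) (use assms in simp_all)
  also have "\<dots> = rs (rs b \<cdot> rs d \<cdot> c) \<cdot> rs b \<cdot> rs d \<cdot> a \<oplus> rs (rs b \<cdot> rs d \<cdot> a) \<cdot> rs b \<cdot> rs d \<cdot> c"
    using assms by (simp add: rest_commute_simps)
  also have "\<dots> = rs b \<cdot> rs d \<cdot> a \<oplus> rs b \<cdot> rs d \<cdot> c"
    by (rule plus_restrict[symmetric]) (use assms in simp_all)
  finally show ?thesis using assms by simp
qed

lemma pair_plus:
  assumes "a \<in> arr S" "b \<in> arr S" "c \<in> arr S" "d \<in> arr S" "src S b = src S a"
    "src S c = src S a" "src S d = src S a" "tgt S c = tgt S a" "tgt S d = tgt S b"
  shows "\<langle>a, b\<rangle> \<oplus> \<langle>c, d\<rangle> = \<langle>a \<oplus> c, b \<oplus> d\<rangle>"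
proof (rule pair_uniq)
  have "(\<langle>a, b\<rangle> \<oplus> \<langle>c, d\<rangle>) \<cdot> p0 (tgt S (a \<oplus> c)) (tgt S (b \<oplus> d)) = rs b \<cdot> a \<oplus> rs d \<cdot> c"
    using assms by (simp add: plus_pr)
  then show "(\<langle>a, b\<rangle> \<oplus> \<langle>c, d\<rangle>) \<cdot> p0 (tgt S (a \<oplus> c)) (tgt S (b \<oplus> d)) = rs (b \<oplus> d) \<cdot> (a \<oplus> c)"
    using assms rest_comp_plus_rest_comp[of a b c d] by simp
  have "(\<langle>a, b\<rangle> \<oplus> \<langle>c, d\<rangle>) \<cdot> p1 (tgt S (a \<oplus> c)) (tgt S (b \<oplus> d)) = rs a \<cdot> b \<oplus> rs c \<cdot> d"
    using assms by (simp add: plus_pr)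
  then show "(\<langle>a, b\<rangle> \<oplus> \<langle>c, d\<rangle>) \<cdot> p1 (tgt S (a \<oplus> c)) (tgt S (b \<oplus> d)) = rs (a \<oplus> c) \<cdot> (b \<oplus> d)"
    using assms rest_comp_plus_rest_comp[of b a d c] by simp
qed (use assms in simp_all)

lemma pair_pair_comp_ftimes_zer:
  assumes "x \<in> arr S" "v \<in> arr S" "w \<in> arr S" "src S v = src S x" "src S w = src S x"
    "tgt S x = X" "tgt S v = A" "tgt S w = A" "A \<in> obj S"
  shows "\<langle>x, \<langle>v, w\<rangle>\<rangle> \<cdot> \<langle>ftimes S (I X) (p0 A A), ftimes S (Z X X) (p1 A A)\<rangle> =
    \<langle>\<langle>x, v\<rangle>, \<langle>Z (src S x) X, w\<rangle>\<rangle>"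
proof -
  define y where "y = \<langle>\<langle>x, v\<rangle>, \<langle>Z (src S x) X, w\<rangle>\<rangle>"
  have X: "X \<in> obj S" using assms by auto
  have "\<langle>x, \<langle>v, w\<rangle>\<rangle> \<cdot> \<langle>ftimes S (I X) (p0 A A), ftimes S (Z X X) (p1 A A)\<rangle> =
      \<langle>\<langle>x, rs w \<cdot> v\<rangle>, \<langle>x \<cdot> Z X X, rs v \<cdot> w\<rangle>\<rangle>"
    using assms X by (simp add: comp_pair pair_ftimes)
  also have "x \<cdot> Z X X = rs x \<cdot> Z (src S x) X" by (rule comp_zer) (use assms X in simp_all)
  also have "\<langle>x, rs w \<cdot> v\<rangle> = rs w \<cdot> \<langle>x, v\<rangle>" by (rule pair_rest_right) (use assms in simp_all)
  also have "\<langle>rs w \<cdot> \<langle>x, v\<rangle>, \<langle>rs x \<cdot> Z (src S x) X, rs v \<cdot> w\<rangle>\<rangle> = rs w \<cdot> rs x \<cdot> rs v \<cdot> y"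
    using assms X by (simp add: y_def pair_rest_right pair_rest_left rest_commute_simps)
  also have "\<dots> = y"
  proof -
    have "rs v \<cdot> y = y" "rs x \<cdot> y = y" "rs w \<cdot> y = y"
      by (rule rest_comp_eq_of_le; use assms X in \<open>simp add: y_def rest_commute_simps\<close>)+
    then show ?thesis by simp
  qed
  finally show ?thesis unfolding y_def .
qed

end

locale reverse_differential =
  fixes S :: "('o, 'm, 'x) cat_data_scheme"
  assumes RDRC: "is_RDRC S"

sublocale reverse_differential \<subseteq> cartesian_left_additive
  using RDRC by unfold_locales (simp add: is_RDRC_def)

context reverse_differential
begin

abbreviation "R \<equiv> rd S"

lemmas RDRC_unfolded = RDRC[unfolded is_RDRC_def]

lemma rd_type[simp]: "f \<in> arr S \<Longrightarrow> rd S f \<in> arr S"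
  "f \<in> arr S \<Longrightarrow> src S (rd S f) = prd S (src S f) (tgt S f)"
  "f \<in> arr S \<Longrightarrow> tgt S (rd S f) = src S f"
  using RDRC_unfolded[THEN conjunct2, THEN conjunct1, rule_format, of "src S f" "tgt S f" f]
  by (auto simp: hom_def)

lemmas rd_axioms = RDRC_unfolded[THEN conjunct2, THEN conjunct2]

lemma rd_plus [simp]:
  assumes "f \<in> arr S" "g \<in> arr S" "src S f = src S g" "tgt S f = tgt S g"
  shows "rd S (plus S f g) = plus S (rd S f) (rd S g)"
  using rd_axioms[THEN conjunct1, rule_format, of "src S f" "tgt S f"] assms by (auto simp: hom_def)

lemma rd_zer[simp]: "X \<in> obj S \<Longrightarrow> Y \<in> obj S \<Longrightarrow> rd S (zer S X Y) = zer S (prd S X Y) X"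
  using rd_axioms[THEN conjunct1, rule_format, of X Y] by auto

lemma pair_plus_rd:
  assumes "f \<in> arr S" "a \<in> arr S" "b \<in> arr S" "c \<in> arr S" "tgt S a = src S f"
    "src S b = src S a" "src S c = src S a" "tgt S b = tgt S f" "tgt S c = tgt S f"
  shows "comp S (pair S a (plus S b c)) (rd S f)
             = plus S (comp S (pair S a b) (rd S f)) (comp S (pair S a c) (rd S f))"
  using rd_axioms[THEN conjunct2, THEN conjunct1, rule_format, of "src S f" "tgt S f" "src S a" f a]
    assms by (auto simp: hom_def)

lemma pair_zer_rd:
  assumes "f \<in> arr S" "a \<in> arr S" "tgt S a = src S f" "C = src S a" "B = tgt S f"
  shows "comp S (pair S a (zer S C B)) (rd S f) = comp S (rest S (comp S a f)) (zer S C (src S f))"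
  using rd_axioms[THEN conjunct2, THEN conjunct1, rule_format, of "src S f" "tgt S f" "src S a" f a]
    assms by (auto simp: hom_def)

lemma rd_pr: "A \<in> obj S \<Longrightarrow> B \<in> obj S \<Longrightarrow>
        rd S (pr0 S A B) = comp S (pr1 S (prd S A B) A) (iota0 S A B)"
  "A \<in> obj S \<Longrightarrow> B \<in> obj S \<Longrightarrow>
        rd S (pr1 S A B) = comp S (pr1 S (prd S A B) B) (iota1 S A B)"
  using rd_axioms[THEN conjunct2, THEN conjunct2, THEN conjunct1, rule_format, of A B] by auto

lemma rd_pair:
  assumes "f \<in> arr S" "g \<in> arr S" "src S f = src S g" "C = src S f" "A = tgt S f" "B = tgt S g"
  shows "rd S (pair S f g) = plus S (comp S (ftimes S (ident S C) (pr0 S A B)) (rd S f))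
                                   (comp S (ftimes S (ident S C) (pr1 S A B)) (rd S g))"
  using rd_axioms[THEN conjunct2, THEN conjunct2, THEN conjunct2, THEN conjunct1, rule_format,
     of "tgt S f" "tgt S g" "src S f" f g] assms by (auto simp: hom_def)

lemma rd_comp:
  assumes "f \<in> arr S" "g \<in> arr S" "tgt S f = src S g" "A = src S f" "C = tgt S g"
  shows "rd S (comp S f g) =
          comp S (pair S (pr0 S A C)
                         (comp S (pair S (comp S (pr0 S A C) f) (pr1 S A C)) (rd S g)))
                 (rd S f)"
  using rd_axioms[THEN conjunct2, THEN conjunct2, THEN conjunct2, THEN conjunct2, THEN conjunct1, rule_format,
     of "src S f" "tgt S f" "tgt S g" f g] assms by (auto simp: hom_def)

lemma rd_axiom6:
  assumes "f \<in> arr S" "A = src S f" "B = tgt S f"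
  shows "comp S (comp S (comp S
          (pair S (ftimes S (ident S A) (pr0 S B B)) (ftimes S (zer S A A) (pr1 S B B)))
          (ftimes S (iota0 S (prd S A B) A) (ident S (prd S A B))))
          (rd S (rd S (rd S f))))
          (pr1 S (prd S A B) A)
        = comp S (ftimes S (ident S A) (pr1 S B B)) (rd S f)"
  using rd_axioms[THEN conjunct2, THEN conjunct2, THEN conjunct2, THEN conjunct2, THEN conjunct2,
     THEN conjunct1, rule_format, of A B f] assms by (auto simp: hom_def)

lemma rd_axiom7:
  assumes "f \<in> arr S" "A = src S f" "B = tgt S f"
  shows "let g = comp S (comp S (ftimes S (iota0 S A B) (ident S A)) (rd S (rd S f))) (pr1 S A B);
            ex = pair S (ftimes S (pr0 S A A) (pr0 S A A)) (ftimes S (pr1 S A A) (pr1 S A A));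
            lhs = comp S (comp S (ftimes S (iota0 S (prd S A A) B) (ident S (prd S A A)))
                                 (rd S (rd S g)))
                         (pr1 S (prd S A A) B)
        in lhs = comp S ex lhs"
  using rd_axioms[THEN conjunct2, THEN conjunct2, THEN conjunct2, THEN conjunct2, THEN conjunct2,
     THEN conjunct2, THEN conjunct1, rule_format, of A B f] assms by (auto simp: hom_def)

lemma rest_rd:
  assumes "f \<in> arr S"
  shows "rest S (rd S f) = ftimes S (rest S f) (ident S (tgt S f))"
  using rd_axioms[THEN conjunct2, THEN conjunct2, THEN conjunct2, THEN conjunct2, THEN conjunct2,
     THEN conjunct2, THEN conjunct2, rule_format, of "src S f" "tgt S f" f] assms by (auto simp: hom_def)

lemma rd_rest:
  assumes "f \<in> arr S"
  shows "rd S (rest S f) = comp S (ftimes S (rest S f) (ident S (src S f))) (pr1 S (src S f) (src S f))"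
  using rd_axioms[THEN conjunct2, THEN conjunct2, THEN conjunct2, THEN conjunct2, THEN conjunct2,
     THEN conjunct2, THEN conjunct2, rule_format, of "src S f" "tgt S f" f] assms by (auto simp: hom_def)

abbreviation K where "K A B \<equiv> ftimes S (iota0 S A B) (I A)"

lemma D_unfold:
  assumes "f \<in> arr S"
  shows "Dfromrd S f = K (src S f) (tgt S f) \<cdot> R (R f) \<cdot> p1 (src S f) (tgt S f)"
  using assms by (simp add: Dfromrd_def)

lemma D_type[simp]:
  assumes "f \<in> arr S"
  shows "Dfromrd S f \<in> arr S" "src S (Dfromrd S f) = pp (src S f) (src S f)"
    "tgt S (Dfromrd S f) = tgt S f"
  using assms by (simp_all add: D_unfold)

lemma pair_comp_K:
  assumes "a \<in> arr S" "v \<in> arr S" "src S v = src S a" "tgt S a = A" "tgt S v = A" "B \<in> obj S" "A \<in> obj S"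
  shows "\<langle>a, v\<rangle> \<cdot> K A B = \<langle>\<langle>a, Z (src S a) B\<rangle>, v\<rangle>"
  using assms by (simp add: pair_ftimes comp_iota0)

lemma rd_ident[simp]: "A \<in> obj S \<Longrightarrow> R (I A) = p1 A A"
  using rd_rest[of "I A"] by simp

lemma rd_iota0: "A \<in> obj S \<Longrightarrow> B \<in> obj S \<Longrightarrow> R (iota0 S A B) = p1 A (pp A B) \<cdot> p0 A B"
  unfolding iota0_def by (simp add: rd_pair)

lemma rd_iota1: "A \<in> obj S \<Longrightarrow> B \<in> obj S \<Longrightarrow> R (iota1 S A B) = p1 B (pp A B) \<cdot> p1 A B"
  unfolding iota1_def by (simp add: rd_pair)

lemma D_zer: "A \<in> obj S \<Longrightarrow> B \<in> obj S \<Longrightarrow> Dfromrd S (Z A B) = Z (pp A A) B"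
  by (simp add: D_unfold)

lemma D_plus:
  assumes "f \<in> arr S" "g \<in> arr S" "src S f = src S g" "tgt S f = tgt S g"
  shows "Dfromrd S (f \<oplus> g) = Dfromrd S f \<oplus> Dfromrd S g"
  using assms by (simp add: D_unfold plus_pr)

lemma pair_comp_D:
  assumes "a \<in> arr S" "v \<in> arr S" "src S v = src S a" "tgt S a = A" "tgt S v = A"
    "f \<in> arr S" "src S f = A" "tgt S f = B" "A \<in> obj S" "B \<in> obj S"
  shows "\<langle>a, v\<rangle> \<cdot> Dfromrd S f = \<langle>\<langle>a, Z (src S a) B\<rangle>, v\<rangle> \<cdot> R (R f) \<cdot> p1 A B"
proof -
  have "\<langle>a, v\<rangle> \<cdot> Dfromrd S f = (\<langle>a, v\<rangle> \<cdot> K A B) \<cdot> R (R f) \<cdot> p1 A B"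
    using assms by (simp add: D_unfold)
  also have "\<dots> = \<langle>\<langle>a, Z (src S a) B\<rangle>, v\<rangle> \<cdot> R (R f) \<cdot> p1 A B"
    using assms by (simp add: pair_comp_K)
  finally show ?thesis .
qed

lemma pair_plus_D:
  assumes "a \<in> arr S" "v \<in> arr S" "w \<in> arr S" "src S v = src S a" "src S w = src S a"
    "tgt S a = A" "tgt S v = A" "tgt S w = A"
    "f \<in> arr S" "src S f = A" "tgt S f = B" "A \<in> obj S" "B \<in> obj S"
  shows "\<langle>a, v \<oplus> w\<rangle> \<cdot> Dfromrd S f = \<langle>a, v\<rangle> \<cdot> Dfromrd S f \<oplus> \<langle>a, w\<rangle> \<cdot> Dfromrd S f"
proof -
  have "\<langle>a, v \<oplus> w\<rangle> \<cdot> Dfromrd S f = \<langle>\<langle>a, Z (src S a) B\<rangle>, v \<oplus> w\<rangle> \<cdot> R (R f) \<cdot> p1 A B"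
    using assms by (simp add: pair_comp_D)
  also have "\<dots> = (\<langle>\<langle>a, Z (src S a) B\<rangle>, v \<oplus> w\<rangle> \<cdot> R (R f)) \<cdot> p1 A B"
    using assms by simp
  also have "\<langle>\<langle>a, Z (src S a) B\<rangle>, v \<oplus> w\<rangle> \<cdot> R (R f) =
      \<langle>\<langle>a, Z (src S a) B\<rangle>, v\<rangle> \<cdot> R (R f) \<oplus> \<langle>\<langle>a, Z (src S a) B\<rangle>, w\<rangle> \<cdot> R (R f)"
    by (rule pair_plus_rd) (use assms in simp_all)
  also have "(\<langle>\<langle>a, Z (src S a) B\<rangle>, v\<rangle> \<cdot> R (R f) \<oplus> \<langle>\<langle>a, Z (src S a) B\<rangle>, w\<rangle> \<cdot> R (R f)) \<cdot> p1 A B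
     = \<langle>\<langle>a, Z (src S a) B\<rangle>, v\<rangle> \<cdot> R (R f) \<cdot> p1 A B \<oplus> \<langle>\<langle>a, Z (src S a) B\<rangle>, w\<rangle> \<cdot> R (R f) \<cdot> p1 A B"
    using assms by (simp add: plus_pr)
  also have "\<dots> = \<langle>a, v\<rangle> \<cdot> Dfromrd S f \<oplus> \<langle>a, w\<rangle> \<cdot> Dfromrd S f"
    using assms by (simp add: pair_comp_D)
  finally show ?thesis .
qed

lemma pair_zer_D:
  assumes "a \<in> arr S" "tgt S a = A"
    "f \<in> arr S" "src S f = A" "tgt S f = B" "A \<in> obj S" "B \<in> obj S"
  shows "\<langle>a, Z (src S a) A\<rangle> \<cdot> Dfromrd S f = rs (a \<cdot> f) \<cdot> Z (src S a) B"
proof -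
  have "\<langle>a, Z (src S a) A\<rangle> \<cdot> Dfromrd S f = (\<langle>\<langle>a, Z (src S a) B\<rangle>, Z (src S a) A\<rangle> \<cdot> R (R f)) \<cdot> p1 A B"
    using assms by (simp add: pair_comp_D)
  also have "\<langle>\<langle>a, Z (src S a) B\<rangle>, Z (src S a) A\<rangle> \<cdot> R (R f) =
     rs (\<langle>a, Z (src S a) B\<rangle> \<cdot> R f) \<cdot> Z (src S a) (src S (R f))"
    by (rule pair_zer_rd) (use assms in simp_all)
  also have "\<langle>a, Z (src S a) B\<rangle> \<cdot> R f = rs (a \<cdot> f) \<cdot> Z (src S a) (src S f)"
    by (rule pair_zer_rd) (use assms in simp_all)
  finally show ?thesis using assms by simp
qed

lemma D_ident: "A \<in> obj S \<Longrightarrow> Dfromrd S (I A) = p1 A A"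
  by (simp add: D_unfold rd_pr)

lemma D_pr0: "A \<in> obj S \<Longrightarrow> B \<in> obj S \<Longrightarrow>
   Dfromrd S (p0 A B) = p1 (pp A B) (pp A B) \<cdot> p0 A B"
  by (simp add: D_unfold rd_pr rd_comp rd_iota0)

lemma D_pr1: "A \<in> obj S \<Longrightarrow> B \<in> obj S \<Longrightarrow>
   Dfromrd S (p1 A B) = p1 (pp A B) (pp A B) \<cdot> p1 A B"
  by (simp add: D_unfold rd_pr rd_comp rd_iota1)

lemma rest_D:
  assumes "f \<in> arr S" "src S f = A" "tgt S f = B" "A \<in> obj S" "B \<in> obj S"
  shows "rs (Dfromrd S f) = ftimes S (rs f) (I A)"
proof -
  have "rs (Dfromrd S f) = rs (K A B \<cdot> R (R f))"
    using assms by (simp add: D_unfold)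
  also have "\<dots> = rs (K A B \<cdot> rs (R (R f)))" using assms by simp
  also have "rs (R (R f)) = ftimes S (ftimes S (rs f) (I B)) (I A)"
    using assms by (simp add: rest_rd)
  also have "ftimes S (ftimes S (rs f) (I B)) (I A) = rs (p0 (pp A B) A \<cdot> rs (p0 A B \<cdot> f))"
    using assms by (simp add: ftimes_rest_ident)
  also have "K A B \<cdot> rs (p0 (pp A B) A \<cdot> rs (p0 A B \<cdot> f)) =
      rs (K A B \<cdot> p0 (pp A B) A \<cdot> rs (p0 A B \<cdot> f)) \<cdot> K A B"
    by (rule comp_rest) (use assms in simp_all)
  also have "rs (K A B \<cdot> p0 (pp A B) A \<cdot> rs (p0 A B \<cdot> f)) = rs (p0 A A \<cdot> f)"
    using assms by simp
  also have "rs (rs (p0 A A \<cdot> f) \<cdot> K A B) = rs (p0 A A \<cdot> f)" using assms by simp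
  also have "\<dots> = ftimes S (rs f) (I A)" using assms by (simp add: ftimes_rest_ident)
  finally show ?thesis .
qed

lemma rd_rest_pr:
  assumes "f \<in> arr S"
  shows "R (rs f) = rs (p0 (src S f) (src S f) \<cdot> f) \<cdot> p1 (src S f) (src S f)"
  using assms by (simp add: rd_rest ftimes_rest_ident)

lemma rd_rest_pr0_comp_pr1:
  assumes "f \<in> arr S" "src S f = A" "A \<in> obj S"
  shows "R (rs (p0 A A \<cdot> f) \<cdot> p1 A A) =
    \<langle>p0 (pp A A) A, rs (p0 (pp A A) A \<cdot> rs (p0 A A \<cdot> f)) \<cdot> p1 (pp A A) A \<cdot> iota1 S A A\<rangle> \<cdot>
      rs (p0 (pp A A) (pp A A) \<cdot> p0 A A \<cdot> f) \<cdot> p1 (pp A A) (pp A A)"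
proof -
  define e where "e = rs (p0 A A \<cdot> f)"
  have e: "e \<in> arr S" "src S e = pp A A" "tgt S e = pp A A" using assms by (simp_all add: e_def)
  have "R (e \<cdot> p1 A A) =
      \<langle>p0 (pp A A) A, \<langle>p0 (pp A A) A \<cdot> e, p1 (pp A A) A\<rangle> \<cdot> R (p1 A A)\<rangle> \<cdot> R e"
    by (rule rd_comp) (use assms e in simp_all)
  also have "\<langle>p0 (pp A A) A \<cdot> e, p1 (pp A A) A\<rangle> \<cdot> R (p1 A A) =
      rs (p0 (pp A A) A \<cdot> e) \<cdot> p1 (pp A A) A \<cdot> iota1 S A A"
    using assms e by (simp add: rd_pr)
  also have "R e = rs (p0 (pp A A) (pp A A) \<cdot> p0 A A \<cdot> f) \<cdot> p1 (pp A A) (pp A A)"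
    using assms by (simp add: e_def rd_rest_pr)
  finally show ?thesis unfolding e_def .
qed

lemma rd_rd_rest:
  assumes "f \<in> arr S" "src S f = A" "A \<in> obj S"
  shows "R (R (rs f)) = rs (p0 (pp A A) A \<cdot> p0 A A \<cdot> f) \<cdot> p1 (pp A A) A \<cdot> iota1 S A A"
proof -
  define E where "E = rs (p0 (pp A A) A \<cdot> p0 A A \<cdot> f)"
  define Y where "Y = E \<cdot> p1 (pp A A) A \<cdot> iota1 S A A"
  have ty: "E \<in> arr S" "src S E = pp (pp A A) A" "tgt S E = pp (pp A A) A"
    "Y \<in> arr S" "src S Y = pp (pp A A) A" "tgt S Y = pp A A"
    using assms by (simp_all add: E_def Y_def)
  have "rs Y = E \<cdot> rs (p1 (pp A A) A \<cdot> iota1 S A A)"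
    unfolding Y_def E_def by (rule rest_rest_comp) (use assms in simp_all)
  then have rY: "rs Y = E" using assms ty by simp
  have "R (rs f) = rs (p0 A A \<cdot> f) \<cdot> p1 A A" using assms by (simp add: rd_rest_pr)
  then have "R (R (rs f)) = R (rs (p0 A A \<cdot> f) \<cdot> p1 A A)" by simp
  also have "\<dots> = \<langle>p0 (pp A A) A, rs (p0 (pp A A) A \<cdot> rs (p0 A A \<cdot> f)) \<cdot> p1 (pp A A) A \<cdot> iota1 S A A\<rangle> \<cdot>
      rs (p0 (pp A A) (pp A A) \<cdot> p0 A A \<cdot> f) \<cdot> p1 (pp A A) (pp A A)"
    by (rule rd_rest_pr0_comp_pr1[OF assms])
  also have "rs (p0 (pp A A) A \<cdot> rs (p0 A A \<cdot> f)) = E"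
    unfolding E_def by (rule rest_comp_rest) (use assms in simp_all)
  also have "\<langle>p0 (pp A A) A, E \<cdot> p1 (pp A A) A \<cdot> iota1 S A A\<rangle> \<cdot>
      rs (p0 (pp A A) (pp A A) \<cdot> p0 A A \<cdot> f) \<cdot> p1 (pp A A) (pp A A) =
      rs (\<langle>p0 (pp A A) A, Y\<rangle> \<cdot> p0 (pp A A) (pp A A) \<cdot> p0 A A \<cdot> f) \<cdot> \<langle>p0 (pp A A) A, Y\<rangle> \<cdot> p1 (pp A A) (pp A A)"
    unfolding Y_def[symmetric] by (rule comp_rest_comp) (use assms ty in simp_all)
  also have "\<langle>p0 (pp A A) A, Y\<rangle> \<cdot> p0 (pp A A) (pp A A) \<cdot> p0 A A \<cdot> f = E \<cdot> p0 (pp A A) A \<cdot> p0 A A \<cdot> f"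
    using assms ty rY by simp
  also have "rs (E \<cdot> p0 (pp A A) A \<cdot> p0 A A \<cdot> f) = E"
    using assms by (simp add: E_def)
  also have "\<langle>p0 (pp A A) A, Y\<rangle> \<cdot> p1 (pp A A) (pp A A) = Y" using assms ty by simp
  finally show ?thesis using assms by (simp add: Y_def E_def)
qed

lemma D_rest:
  assumes "f \<in> arr S" "src S f = A" "tgt S f = B" "A \<in> obj S" "B \<in> obj S"
  shows "Dfromrd S (rs f) = ftimes S (rs f) (I A) \<cdot> p1 A A"
proof -
  have "Dfromrd S (rs f) = K A A \<cdot> (rs (p0 (pp A A) A \<cdot> p0 A A \<cdot> f) \<cdot> p1 (pp A A) A \<cdot> iota1 S A A) \<cdot> p1 A A"
    using assms by (simp add: D_unfold rd_rd_rest)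
  also have "\<dots> = (K A A \<cdot> rs (p0 (pp A A) A \<cdot> p0 A A \<cdot> f)) \<cdot> p1 (pp A A) A"
    using assms by simp
  also have "K A A \<cdot> rs (p0 (pp A A) A \<cdot> p0 A A \<cdot> f) = rs (K A A \<cdot> p0 (pp A A) A \<cdot> p0 A A \<cdot> f) \<cdot> K A A"
    by (rule comp_rest) (use assms in simp_all)
  also have "rs (K A A \<cdot> p0 (pp A A) A \<cdot> p0 A A \<cdot> f) = rs (p0 A A \<cdot> f)" using assms by simp
  also have "(rs (p0 A A \<cdot> f) \<cdot> K A A) \<cdot> p1 (pp A A) A = rs (p0 A A \<cdot> f) \<cdot> p1 A A"
    using assms by simp
  also have "\<dots> = ftimes S (rs f) (I A) \<cdot> p1 A A" using assms by (simp add: ftimes_rest_ident)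
  finally show ?thesis .
qed

lemma D_D_ex:
  assumes "f \<in> arr S" "src S f = A" "tgt S f = B" "A \<in> obj S" "B \<in> obj S"
  shows "Dfromrd S (Dfromrd S f) = ex A \<cdot> Dfromrd S (Dfromrd S f)"
proof -
  have "Dfromrd S f = comp S (comp S (ftimes S (iota0 S A B) (ident S A)) (rd S (rd S f))) (pr1 S A B)"
    using assms by (simp add: Dfromrd_def)
  moreover have "Dfromrd S (Dfromrd S f) = comp S (comp S (ftimes S (iota0 S (prd S A A) B) (ident S (prd S A A)))
                                 (rd S (rd S (Dfromrd S f))))
                         (pr1 S (prd S A A) B)"
    using assms by (simp add: Dfromrd_def[of S "Dfromrd S f"])
  ultimately show ?thesis using rd_axiom7[OF assms(1), unfolded Let_def] assms by metis
qed

lemma D_D_swap: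
  assumes "a \<in> arr S" "u \<in> arr S" "v \<in> arr S" "src S u = src S a" "src S v = src S a"
    "tgt S a = A" "tgt S u = A" "tgt S v = A" "A \<in> obj S"
    "f \<in> arr S" "src S f = A" "tgt S f = B" "B \<in> obj S"
  shows "\<langle>\<langle>a, v\<rangle>, \<langle>u, Z (src S a) A\<rangle>\<rangle> \<cdot> Dfromrd S (Dfromrd S f) =
         \<langle>\<langle>a, u\<rangle>, \<langle>v, Z (src S a) A\<rangle>\<rangle> \<cdot> Dfromrd S (Dfromrd S f)"
proof -
  have "\<langle>\<langle>a, v\<rangle>, \<langle>u, Z (src S a) A\<rangle>\<rangle> \<cdot> Dfromrd S (Dfromrd S f) =
     \<langle>\<langle>a, v\<rangle>, \<langle>u, Z (src S a) A\<rangle>\<rangle> \<cdot> ex A \<cdot> Dfromrd S (Dfromrd S f)"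
    using D_D_ex[OF assms(10-12,9,13)] by simp
  also have "\<dots> = (\<langle>\<langle>a, v\<rangle>, \<langle>u, Z (src S a) A\<rangle>\<rangle> \<cdot> ex A) \<cdot> Dfromrd S (Dfromrd S f)"
    using assms by simp
  also have "\<langle>\<langle>a, v\<rangle>, \<langle>u, Z (src S a) A\<rangle>\<rangle> \<cdot> ex A = \<langle>\<langle>a, u\<rangle>, \<langle>v, Z (src S a) A\<rangle>\<rangle>"
    by (rule pair_pair_comp_ex) (use assms in simp_all)
  finally show ?thesis .
qed

lemma rest_K_rd_rd:
  assumes "f \<in> arr S" "src S f = A" "tgt S f = B" "A \<in> obj S" "B \<in> obj S"
  shows "rs (K A B \<cdot> R (R f)) = rs (p0 A A \<cdot> f)"
proof -
  have "rs (K A B \<cdot> R (R f)) = rs (Dfromrd S f)" using assms by (simp add: D_unfold)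
  also have "\<dots> = rs (p0 A A \<cdot> f)" using assms by (simp add: rest_D ftimes_rest_ident)
  finally show ?thesis .
qed

lemma iota0_comp_factor:
  assumes "f \<in> arr S" "g \<in> arr S" "src S f = A" "tgt S f = B" "src S g = B" "tgt S g = C"
    "A \<in> obj S" "B \<in> obj S" "C \<in> obj S"
  shows "iota0 S A C \<cdot> \<langle>p0 A C, \<langle>p0 A C \<cdot> f, p1 A C\<rangle> \<cdot> R g\<rangle> = rs (f \<cdot> g) \<cdot> iota0 S A B"
proof -
  have "iota0 S A C \<cdot> \<langle>p0 A C, \<langle>p0 A C \<cdot> f, p1 A C\<rangle> \<cdot> R g\<rangle> = \<langle>I A, \<langle>f, Z A C\<rangle> \<cdot> R g\<rangle>"
    using assms by (simp add: comp_pair comp_pair_comp)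
  also have "\<langle>f, Z A C\<rangle> \<cdot> R g = rs (f \<cdot> g) \<cdot> Z A (src S g)"
    by (rule pair_zer_rd) (use assms in simp_all)
  also have "src S g = B" by (rule assms)
  also have "\<langle>I A, rs (f \<cdot> g) \<cdot> Z A B\<rangle> = rs (f \<cdot> g) \<cdot> \<langle>I A, Z A B\<rangle>"
    by (rule pair_rest_right) (use assms in simp_all)
  finally show ?thesis by (simp add: iota0_def)
qed

lemma rest_rd_pr:
  assumes "f \<in> arr S" "src S f = A" "tgt S f = B" "A \<in> obj S" "B \<in> obj S"
  shows "rs (R f) = rs (p0 A B \<cdot> f)"
  using assms by (simp add: rest_rd ftimes_rest_ident)

lemma rd_pr0_comp_pr1:
  assumes "f \<in> arr S" "src S f = A" "tgt S f = B" "A \<in> obj S" "B \<in> obj S" "C \<in> obj S"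
  shows "R (p0 A C \<cdot> f) \<cdot> p1 A C = rs (p0 (pp A C) B \<cdot> p0 A C \<cdot> f) \<cdot> Z (pp (pp A C) B) C"
proof -
  define N where "N = \<langle>p0 (pp A C) B \<cdot> p0 A C, p1 (pp A C) B\<rangle> \<cdot> R f"
  have N: "N \<in> arr S" "src S N = pp (pp A C) B" "tgt S N = A" using assms by (simp_all add: N_def)
  have "rs N = rs (\<langle>p0 (pp A C) B \<cdot> p0 A C, p1 (pp A C) B\<rangle> \<cdot> rs (R f))"
    unfolding N_def by (rule rest_comp_rest[symmetric]) (use assms in simp_all)
  also have "rs (R f) = rs (p0 A B \<cdot> f)" using assms by (simp add: rest_rd_pr)
  also have "rs (\<langle>p0 (pp A C) B \<cdot> p0 A C, p1 (pp A C) B\<rangle> \<cdot> rs (p0 A B \<cdot> f)) =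
      rs (\<langle>p0 (pp A C) B \<cdot> p0 A C, p1 (pp A C) B\<rangle> \<cdot> p0 A B \<cdot> f)"
    by (rule rest_comp_rest) (use assms in simp_all)
  finally have rN: "rs N = rs (p0 (pp A C) B \<cdot> p0 A C \<cdot> f)" using assms by simp
  have "R (p0 A C \<cdot> f) = \<langle>p0 (pp A C) B, N\<rangle> \<cdot> R (p0 A C)"
    unfolding N_def by (rule rd_comp) (use assms in simp_all)
  then have "R (p0 A C \<cdot> f) \<cdot> p1 A C = N \<cdot> Z A C" using assms N by (simp add: rd_pr)
  also have "\<dots> = rs N \<cdot> Z (pp (pp A C) B) C" using N assms comp_zer[of N A C] by simp
  finally show ?thesis unfolding rN .
qed

lemma rd_times_ident_pr1:
  assumes "f \<in> arr S" "src S f = A" "tgt S f = B" "A \<in> obj S" "B \<in> obj S" "C \<in> obj S"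
  shows "R \<langle>p0 A C \<cdot> f, p1 A C\<rangle> \<cdot> p1 A C =
     rs (p0 (pp A C) (pp B C) \<cdot> p0 A C \<cdot> f) \<cdot> p1 (pp A C) (pp B C) \<cdot> p1 B C"
proof -
  define T0 where "T0 = ftimes S (I (pp A C)) (p0 B C)"
  have T0: "T0 \<in> arr S" "src S T0 = pp (pp A C) (pp B C)" "tgt S T0 = pp (pp A C) B"
    using assms by (simp_all add: T0_def)
  have "T0 \<cdot> R (p0 A C \<cdot> f) \<cdot> p1 A C = T0 \<cdot> rs (p0 (pp A C) B \<cdot> p0 A C \<cdot> f) \<cdot> Z (pp (pp A C) B) C"
    using rd_pr0_comp_pr1[OF assms] by simp
  also have "\<dots> = rs (T0 \<cdot> p0 (pp A C) B \<cdot> p0 A C \<cdot> f) \<cdot> T0 \<cdot> Z (pp (pp A C) B) C"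
    by (rule comp_rest_comp) (use assms T0 in simp_all)
  also have "T0 \<cdot> p0 (pp A C) B \<cdot> p0 A C \<cdot> f = p0 (pp A C) (pp B C) \<cdot> p0 A C \<cdot> f"
    using assms by (simp add: T0_def)
  also have "T0 \<cdot> Z (pp (pp A C) B) C = Z (pp (pp A C) (pp B C)) C" using assms by (simp add: T0_def)
  finally have pr0_part: "T0 \<cdot> R (p0 A C \<cdot> f) \<cdot> p1 A C =
      rs (p0 (pp A C) (pp B C) \<cdot> p0 A C \<cdot> f) \<cdot> Z (pp (pp A C) (pp B C)) C" .
  have pr1_part: "ftimes S (I (pp A C)) (p1 B C) \<cdot> R (p1 A C) \<cdot> p1 A C = p1 (pp A C) (pp B C) \<cdot> p1 B C"
    using assms by (simp add: rd_pr)
  have "R \<langle>p0 A C \<cdot> f, p1 A C\<rangle> =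
      T0 \<cdot> R (p0 A C \<cdot> f) \<oplus> ftimes S (I (pp A C)) (p1 B C) \<cdot> R (p1 A C)"
    unfolding T0_def by (rule rd_pair) (use assms in simp_all)
  then have "R \<langle>p0 A C \<cdot> f, p1 A C\<rangle> \<cdot> p1 A C =
      T0 \<cdot> R (p0 A C \<cdot> f) \<cdot> p1 A C \<oplus> ftimes S (I (pp A C)) (p1 B C) \<cdot> R (p1 A C) \<cdot> p1 A C"
    using assms T0 by (simp add: plus_pr)
  also have "\<dots> = rs (p0 (pp A C) (pp B C) \<cdot> p0 A C \<cdot> f) \<cdot> Z (pp (pp A C) (pp B C)) C \<oplus>
      p1 (pp A C) (pp B C) \<cdot> p1 B C"
    unfolding pr0_part pr1_part ..
  also have "\<dots> = rs (p0 (pp A C) (pp B C) \<cdot> p0 A C \<cdot> f) \<cdot> p1 (pp A C) (pp B C) \<cdot> p1 B C"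
    by (rule plus_rest_zer(2)) (use assms in simp_all)
  finally show ?thesis .
qed

lemma rd_times_ident_rd_pr1:
  assumes "f \<in> arr S" "g \<in> arr S" "src S f = A" "tgt S f = B" "src S g = B" "tgt S g = C"
    "A \<in> obj S" "B \<in> obj S" "C \<in> obj S"
  shows "R (\<langle>p0 A C \<cdot> f, p1 A C\<rangle> \<cdot> R g) \<cdot> p1 A C =
     rs (p0 (pp A C) B \<cdot> p0 A C \<cdot> f) \<cdot> \<langle>p0 (pp A C) B \<cdot> \<langle>p0 A C \<cdot> f, p1 A C\<rangle>, p1 (pp A C) B\<rangle> \<cdot> R (R g) \<cdot> p1 B C"
proof -
  define Ng where "Ng = \<langle>p0 (pp A C) B \<cdot> \<langle>p0 A C \<cdot> f, p1 A C\<rangle>, p1 (pp A C) B\<rangle> \<cdot> R (R g)"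
  have N: "Ng \<in> arr S" "src S Ng = pp (pp A C) B" "tgt S Ng = pp B C" using assms by (simp_all add: Ng_def)
  define Phi where "Phi = p0 (pp A C) B \<cdot> p0 A C \<cdot> f"
  have Ph: "Phi \<in> arr S" "src S Phi = pp (pp A C) B" "tgt S Phi = B" using assms by (simp_all add: Phi_def)
  have a: "R (\<langle>p0 A C \<cdot> f, p1 A C\<rangle> \<cdot> R g) = \<langle>p0 (pp A C) B, Ng\<rangle> \<cdot> R \<langle>p0 A C \<cdot> f, p1 A C\<rangle>"
    unfolding Ng_def by (rule rd_comp) (use assms in simp_all)
  have "R (\<langle>p0 A C \<cdot> f, p1 A C\<rangle> \<cdot> R g) \<cdot> p1 A C = \<langle>p0 (pp A C) B, Ng\<rangle> \<cdot> (R \<langle>p0 A C \<cdot> f, p1 A C\<rangle> \<cdot> p1 A C)"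
    unfolding a using assms N by simp
  also have "R \<langle>p0 A C \<cdot> f, p1 A C\<rangle> \<cdot> p1 A C =
     rs (p0 (pp A C) (pp B C) \<cdot> p0 A C \<cdot> f) \<cdot> p1 (pp A C) (pp B C) \<cdot> p1 B C"
    by (rule rd_times_ident_pr1) (use assms in simp_all)
  also have "\<langle>p0 (pp A C) B, Ng\<rangle> \<cdot> rs (p0 (pp A C) (pp B C) \<cdot> p0 A C \<cdot> f) \<cdot> p1 (pp A C) (pp B C) \<cdot> p1 B C
     = (\<langle>p0 (pp A C) B, Ng\<rangle> \<cdot> rs (p0 (pp A C) (pp B C) \<cdot> p0 A C \<cdot> f)) \<cdot> p1 (pp A C) (pp B C) \<cdot> p1 B C"
    using assms N by simp
  also have "\<langle>p0 (pp A C) B, Ng\<rangle> \<cdot> rs (p0 (pp A C) (pp B C) \<cdot> p0 A C \<cdot> f) =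
      rs (\<langle>p0 (pp A C) B, Ng\<rangle> \<cdot> p0 (pp A C) (pp B C) \<cdot> p0 A C \<cdot> f) \<cdot> \<langle>p0 (pp A C) B, Ng\<rangle>"
    by (rule comp_rest) (use assms N in simp_all)
  also have "\<langle>p0 (pp A C) B, Ng\<rangle> \<cdot> p0 (pp A C) (pp B C) \<cdot> p0 A C \<cdot> f = rs Ng \<cdot> Phi"
    using assms N by (simp add: Phi_def)
  also have "rs (rs Ng \<cdot> Phi) = rs Ng \<cdot> rs Phi" using N Ph by simp
  also have "((rs Ng \<cdot> rs Phi) \<cdot> \<langle>p0 (pp A C) B, Ng\<rangle>) \<cdot> p1 (pp A C) (pp B C) \<cdot> p1 B C =
     rs Ng \<cdot> rs Phi \<cdot> Ng \<cdot> p1 B C"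
    using assms N Ph by simp
  also have "\<dots> = rs Phi \<cdot> Ng \<cdot> p1 B C"
    by (rule rest_absorb_comp) (use assms N Ph in simp_all)
  finally show ?thesis unfolding Ng_def Phi_def using assms by simp
qed

lemma rd_factor_pr1:
  assumes "f \<in> arr S" "g \<in> arr S" "src S f = A" "tgt S f = B" "src S g = B" "tgt S g = C"
    "A \<in> obj S" "B \<in> obj S" "C \<in> obj S"
  shows "R \<langle>p0 A C, \<langle>p0 A C \<cdot> f, p1 A C\<rangle> \<cdot> R g\<rangle> \<cdot> p1 A C =
     rs (p0 (pp A C) (pp A B) \<cdot> p0 A C \<cdot> f) \<cdot> ftimes S (I (pp A C)) (p1 A B) \<cdot>
       \<langle>p0 (pp A C) B \<cdot> \<langle>p0 A C \<cdot> f, p1 A C\<rangle>, p1 (pp A C) B\<rangle> \<cdot> R (R g) \<cdot> p1 B C"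
proof -
  define Ng where "Ng = \<langle>p0 (pp A C) B \<cdot> \<langle>p0 A C \<cdot> f, p1 A C\<rangle>, p1 (pp A C) B\<rangle> \<cdot> R (R g)"
  have N: "Ng \<in> arr S" "src S Ng = pp (pp A C) B" "tgt S Ng = pp B C" using assms by (simp_all add: Ng_def)
  define G where "G = \<langle>p0 A C \<cdot> f, p1 A C\<rangle> \<cdot> R g"
  have Gt: "G \<in> arr S" "src S G = pp A C" "tgt S G = B" using assms by (simp_all add: G_def)
  define T1 where "T1 = ftimes S (I (pp A C)) (p1 A B)"
  have T1: "T1 \<in> arr S" "src S T1 = pp (pp A C) (pp A B)" "tgt S T1 = pp (pp A C) B"
     "rs T1 = I (pp (pp A C) (pp A B))" using assms by (simp_all add: T1_def)
  have a: "R \<langle>p0 A C, G\<rangle> = ftimes S (I (pp A C)) (p0 A B) \<cdot> R (p0 A C) \<oplus> T1 \<cdot> R G"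
    unfolding T1_def by (rule rd_pair) (use assms Gt in simp_all)
  have "R \<langle>p0 A C, G\<rangle> \<cdot> p1 A C = ftimes S (I (pp A C)) (p0 A B) \<cdot> R (p0 A C) \<cdot> p1 A C \<oplus> T1 \<cdot> R G \<cdot> p1 A C"
    unfolding a using assms Gt T1 by (simp add: plus_pr)
  also have "ftimes S (I (pp A C)) (p0 A B) \<cdot> R (p0 A C) \<cdot> p1 A C = Z (pp (pp A C) (pp A B)) C"
    using assms by (simp add: rd_pr)
  also have "R G \<cdot> p1 A C = rs (p0 (pp A C) B \<cdot> p0 A C \<cdot> f) \<cdot> Ng \<cdot> p1 B C"
    unfolding G_def Ng_def using rd_times_ident_rd_pr1[OF assms] assms by simp
  also have "T1 \<cdot> rs (p0 (pp A C) B \<cdot> p0 A C \<cdot> f) \<cdot> Ng \<cdot> p1 B C = (T1 \<cdot> rs (p0 (pp A C) B \<cdot> p0 A C \<cdot> f)) \<cdot> Ng \<cdot> p1 B C"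
    using assms T1 N by simp
  also have "T1 \<cdot> rs (p0 (pp A C) B \<cdot> p0 A C \<cdot> f) = rs (T1 \<cdot> p0 (pp A C) B \<cdot> p0 A C \<cdot> f) \<cdot> T1"
    by (rule comp_rest) (use assms T1 in simp_all)
  also have "rs (T1 \<cdot> p0 (pp A C) B \<cdot> p0 A C \<cdot> f) = rs (p0 (pp A C) (pp A B) \<cdot> p0 A C \<cdot> f)"
    using assms by (simp add: T1_def)
  also have "Z (pp (pp A C) (pp A B)) C \<oplus> (rs (p0 (pp A C) (pp A B) \<cdot> p0 A C \<cdot> f) \<cdot> T1) \<cdot> Ng \<cdot> p1 B C
     = rs (p0 (pp A C) (pp A B) \<cdot> p0 A C \<cdot> f) \<cdot> T1 \<cdot> Ng \<cdot> p1 B C"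
    using assms T1 N by simp
  finally show ?thesis unfolding Ng_def T1_def G_def using assms by simp
qed

lemma K_comp_rd_comp_factor:
  assumes "f \<in> arr S" "g \<in> arr S" "src S f = A" "tgt S f = B" "src S g = B" "tgt S g = C"
    "A \<in> obj S" "B \<in> obj S" "C \<in> obj S"
  shows "K A C \<cdot> \<langle>p0 (pp A C) A,
      \<langle>p0 (pp A C) A \<cdot> \<langle>p0 A C, \<langle>p0 A C \<cdot> f, p1 A C\<rangle> \<cdot> R g\<rangle>, p1 (pp A C) A\<rangle> \<cdot> R (R f)\<rangle>
    = \<langle>p0 A A \<cdot> iota0 S A C, rs (p0 A A \<cdot> f \<cdot> g) \<cdot> K A B \<cdot> R (R f)\<rangle>"
proof -
  define F where "F = \<langle>p0 A C, \<langle>p0 A C \<cdot> f, p1 A C\<rangle> \<cdot> R g\<rangle>"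
  have F: "F \<in> arr S" "src S F = pp A C" "tgt S F = pp A B" using assms by (simp_all add: F_def)
  have "K A C \<cdot> \<langle>p0 (pp A C) A, \<langle>p0 (pp A C) A \<cdot> F, p1 (pp A C) A\<rangle> \<cdot> R (R f)\<rangle> =
     \<langle>p0 A A \<cdot> iota0 S A C, \<langle>p0 A A \<cdot> iota0 S A C \<cdot> F, p1 A A\<rangle> \<cdot> R (R f)\<rangle>"
    using assms F by (simp add: comp_pair comp_pair_comp)
  also have "iota0 S A C \<cdot> F = rs (f \<cdot> g) \<cdot> iota0 S A B"
    unfolding F_def by (rule iota0_comp_factor) (use assms in simp_all)
  also have "p0 A A \<cdot> rs (f \<cdot> g) \<cdot> iota0 S A B = rs (p0 A A \<cdot> f \<cdot> g) \<cdot> p0 A A \<cdot> iota0 S A B"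
    by (rule comp_rest_comp) (use assms in simp_all)
  also have "\<langle>rs (p0 A A \<cdot> f \<cdot> g) \<cdot> p0 A A \<cdot> iota0 S A B, p1 A A\<rangle> =
      rs (p0 A A \<cdot> f \<cdot> g) \<cdot> \<langle>p0 A A \<cdot> iota0 S A B, p1 A A\<rangle>"
    by (rule pair_rest_left) (use assms in simp_all)
  also have "\<langle>p0 A A \<cdot> iota0 S A B, p1 A A\<rangle> = K A B" using assms by (simp add: ftimes_def)
  finally show ?thesis using assms by (simp add: F_def)
qed

lemma rest_comp_D_absorb:
  assumes "f \<in> arr S" "g \<in> arr S" "tgt S f = src S g" "src S f = A" "tgt S f = B"
    "A \<in> obj S" "B \<in> obj S"
  shows "rs (rs (p0 A A \<cdot> f \<cdot> g) \<cdot> p0 A A \<cdot> f) = rs (p0 A A \<cdot> f \<cdot> g)"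
    and "rs (rs (p0 A A \<cdot> f \<cdot> g) \<cdot> Dfromrd S f) = rs (p0 A A \<cdot> f \<cdot> g)"
    and "rs (rs (p0 A A \<cdot> f \<cdot> g) \<cdot> K A B \<cdot> R (R f)) = rs (p0 A A \<cdot> f \<cdot> g)"
proof -
  have le: "rs (p0 A A \<cdot> f \<cdot> g) \<cdot> rs (p0 A A \<cdot> f) = rs (p0 A A \<cdot> f \<cdot> g)"
    by (rule rest_comp_comp_le) (use assms in simp_all)
  have "rs (rs (p0 A A \<cdot> f \<cdot> g) \<cdot> p0 A A \<cdot> f) = rs (p0 A A \<cdot> f \<cdot> g) \<cdot> rs (p0 A A \<cdot> f)"
    by (rule rest_rest_comp) (use assms in simp_all)
  then show "rs (rs (p0 A A \<cdot> f \<cdot> g) \<cdot> p0 A A \<cdot> f) = rs (p0 A A \<cdot> f \<cdot> g)" using le by simp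
  have "rs (rs (p0 A A \<cdot> f \<cdot> g) \<cdot> Dfromrd S f) = rs (p0 A A \<cdot> f \<cdot> g) \<cdot> rs (Dfromrd S f)"
    by (rule rest_rest_comp) (use assms in simp_all)
  also have "rs (Dfromrd S f) = rs (p0 A A \<cdot> f)" using assms by (simp add: rest_D ftimes_rest_ident)
  finally show "rs (rs (p0 A A \<cdot> f \<cdot> g) \<cdot> Dfromrd S f) = rs (p0 A A \<cdot> f \<cdot> g)" using le by simp
  have "rs (rs (p0 A A \<cdot> f \<cdot> g) \<cdot> K A B \<cdot> R (R f)) = rs (p0 A A \<cdot> f \<cdot> g) \<cdot> rs (K A B \<cdot> R (R f))"
    by (rule rest_rest_comp) (use assms in simp_all)
  also have "rs (K A B \<cdot> R (R f)) = rs (p0 A A \<cdot> f)" by (rule rest_K_rd_rd) (use assms in simp_all)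
  finally show "rs (rs (p0 A A \<cdot> f \<cdot> g) \<cdot> K A B \<cdot> R (R f)) = rs (p0 A A \<cdot> f \<cdot> g)" using le by simp
qed

lemma pair_iota0_D_comp_rd_rd_pr1:
  assumes "f \<in> arr S" "g \<in> arr S" "src S f = A" "tgt S f = B" "src S g = B" "tgt S g = C"
    "A \<in> obj S" "B \<in> obj S" "C \<in> obj S"
  shows "(\<langle>p0 A A \<cdot> iota0 S A C, rs (p0 A A \<cdot> f \<cdot> g) \<cdot> Dfromrd S f\<rangle> \<cdot>
      \<langle>p0 (pp A C) B \<cdot> \<langle>p0 A C \<cdot> f, p1 A C\<rangle>, p1 (pp A C) B\<rangle> \<cdot> R (R g)) \<cdot> p1 B C =
    rs (p0 A A \<cdot> f \<cdot> g) \<cdot> \<langle>p0 A A \<cdot> f, Dfromrd S f\<rangle> \<cdot> Dfromrd S g"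
proof -
  define E where "E = rs (p0 A A \<cdot> f \<cdot> g)"
  have E: "E \<in> arr S" "src S E = pp A A" "tgt S E = pp A A" using assms by (simp_all add: E_def)
  have "\<langle>p0 A A \<cdot> iota0 S A C, E \<cdot> Dfromrd S f\<rangle> \<cdot>
      \<langle>p0 (pp A C) B \<cdot> \<langle>p0 A C \<cdot> f, p1 A C\<rangle>, p1 (pp A C) B\<rangle> \<cdot> R (R g) =
    \<langle>rs (E \<cdot> Dfromrd S f) \<cdot> p0 A A \<cdot> iota0 S A C \<cdot> \<langle>p0 A C \<cdot> f, p1 A C\<rangle>, E \<cdot> Dfromrd S f\<rangle> \<cdot> R (R g)"
    using assms E by (simp add: comp_pair_comp)
  also have "iota0 S A C \<cdot> \<langle>p0 A C \<cdot> f, p1 A C\<rangle> = \<langle>f, Z A C\<rangle>"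
    using assms by (simp add: comp_pair)
  also have "p0 A A \<cdot> \<langle>f, Z A C\<rangle> = \<langle>p0 A A \<cdot> f, Z (pp A A) C\<rangle>"
    using assms by (simp add: comp_pair)
  also have "rs (E \<cdot> Dfromrd S f) = E"
    unfolding E_def by (rule rest_comp_D_absorb(2)[where B = B]) (use assms in simp_all)
  also have "\<langle>E \<cdot> \<langle>p0 A A \<cdot> f, Z (pp A A) C\<rangle>, E \<cdot> Dfromrd S f\<rangle> =
      E \<cdot> \<langle>\<langle>p0 A A \<cdot> f, Z (pp A A) C\<rangle>, Dfromrd S f\<rangle>"
    using assms E by (simp add: comp_pair)
  finally have "(\<langle>p0 A A \<cdot> iota0 S A C, E \<cdot> Dfromrd S f\<rangle> \<cdot>
      \<langle>p0 (pp A C) B \<cdot> \<langle>p0 A C \<cdot> f, p1 A C\<rangle>, p1 (pp A C) B\<rangle> \<cdot> R (R g)) \<cdot> p1 B C =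
    E \<cdot> \<langle>\<langle>p0 A A \<cdot> f, Z (pp A A) C\<rangle>, Dfromrd S f\<rangle> \<cdot> R (R g) \<cdot> p1 B C"
    using assms E by simp
  also have "\<langle>\<langle>p0 A A \<cdot> f, Z (pp A A) C\<rangle>, Dfromrd S f\<rangle> \<cdot> R (R g) \<cdot> p1 B C =
      \<langle>p0 A A \<cdot> f, Dfromrd S f\<rangle> \<cdot> Dfromrd S g"
    using assms pair_comp_D[of "p0 A A \<cdot> f" "Dfromrd S f" B g C] by simp
  finally show ?thesis unfolding E_def .
qed

lemma D_comp_expand:
  assumes "f \<in> arr S" "g \<in> arr S" "src S f = A" "tgt S f = B" "src S g = B" "tgt S g = C"
    "A \<in> obj S" "B \<in> obj S" "C \<in> obj S"
  shows "Dfromrd S (f \<cdot> g) =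
    \<langle>p0 A A \<cdot> iota0 S A C, rs (p0 A A \<cdot> f \<cdot> g) \<cdot> K A B \<cdot> R (R f)\<rangle> \<cdot>
      rs (p0 (pp A C) (pp A B) \<cdot> p0 A C \<cdot> f) \<cdot> ftimes S (I (pp A C)) (p1 A B) \<cdot>
      \<langle>p0 (pp A C) B \<cdot> \<langle>p0 A C \<cdot> f, p1 A C\<rangle>, p1 (pp A C) B\<rangle> \<cdot> R (R g) \<cdot> p1 B C"
proof -
  define F where "F = \<langle>p0 A C, \<langle>p0 A C \<cdot> f, p1 A C\<rangle> \<cdot> R g\<rangle>"
  have F: "F \<in> arr S" "src S F = pp A C" "tgt S F = pp A B" using assms by (simp_all add: F_def)
  have "R (f \<cdot> g) = F \<cdot> R f" unfolding F_def by (rule rd_comp) (use assms in simp_all)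
  moreover have "R (F \<cdot> R f) =
      \<langle>p0 (pp A C) A, \<langle>p0 (pp A C) A \<cdot> F, p1 (pp A C) A\<rangle> \<cdot> R (R f)\<rangle> \<cdot> R F"
    by (rule rd_comp) (use assms F in simp_all)
  ultimately have "Dfromrd S (f \<cdot> g) =
      (K A C \<cdot> \<langle>p0 (pp A C) A, \<langle>p0 (pp A C) A \<cdot> F, p1 (pp A C) A\<rangle> \<cdot> R (R f)\<rangle>) \<cdot> (R F \<cdot> p1 A C)"
    using assms F by (simp add: D_unfold)
  also have "K A C \<cdot> \<langle>p0 (pp A C) A, \<langle>p0 (pp A C) A \<cdot> F, p1 (pp A C) A\<rangle> \<cdot> R (R f)\<rangle> =
      \<langle>p0 A A \<cdot> iota0 S A C, rs (p0 A A \<cdot> f \<cdot> g) \<cdot> K A B \<cdot> R (R f)\<rangle>"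
    unfolding F_def by (rule K_comp_rd_comp_factor[OF assms])
  also have "R F \<cdot> p1 A C = rs (p0 (pp A C) (pp A B) \<cdot> p0 A C \<cdot> f) \<cdot> ftimes S (I (pp A C)) (p1 A B) \<cdot>
      \<langle>p0 (pp A C) B \<cdot> \<langle>p0 A C \<cdot> f, p1 A C\<rangle>, p1 (pp A C) B\<rangle> \<cdot> R (R g) \<cdot> p1 B C"
    unfolding F_def by (rule rd_factor_pr1[OF assms])
  finally show ?thesis using assms by simp
qed

lemma D_comp_restricted:
  assumes "f \<in> arr S" "g \<in> arr S" "src S f = A" "tgt S f = B" "src S g = B" "tgt S g = C"
    "A \<in> obj S" "B \<in> obj S" "C \<in> obj S"
  shows "Dfromrd S (f \<cdot> g) = rs (p0 A A \<cdot> f \<cdot> g) \<cdot> \<langle>p0 A A \<cdot> f, Dfromrd S f\<rangle> \<cdot> Dfromrd S g"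
proof -
  define E where "E = rs (p0 A A \<cdot> f \<cdot> g)"
  have E: "E \<in> arr S" "src S E = pp A A" "tgt S E = pp A A" using assms by (simp_all add: E_def)
  define W where "W = \<langle>p0 A A \<cdot> iota0 S A C, E \<cdot> K A B \<cdot> R (R f)\<rangle>"
  have W: "W \<in> arr S" "src S W = pp A A" "tgt S W = pp (pp A C) (pp A B)"
    using assms E by (simp_all add: W_def)
  define N where "N = \<langle>p0 (pp A C) B \<cdot> \<langle>p0 A C \<cdot> f, p1 A C\<rangle>, p1 (pp A C) B\<rangle>"
  have N: "N \<in> arr S" "src S N = pp (pp A C) B" "tgt S N = pp (pp B C) B"
    using assms by (simp_all add: N_def)
  have rEK: "rs (E \<cdot> K A B \<cdot> R (R f)) = E"
    unfolding E_def by (rule rest_comp_D_absorb(3)) (use assms in simp_all)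
  have "rs W = rs (E \<cdot> K A B \<cdot> R (R f)) \<cdot> rs (p0 A A \<cdot> iota0 S A C)"
    unfolding W_def by (rule rest_pair) (use assms E in simp_all)
  then have rW: "rs W = E" using assms E rEK by simp
  have "Dfromrd S (f \<cdot> g) =
      W \<cdot> rs (p0 (pp A C) (pp A B) \<cdot> p0 A C \<cdot> f) \<cdot> ftimes S (I (pp A C)) (p1 A B) \<cdot> N \<cdot> R (R g) \<cdot> p1 B C"
    by (rule D_comp_expand[OF assms, folded E_def, folded W_def N_def])
  also have "\<dots> =
      (W \<cdot> rs (p0 (pp A C) (pp A B) \<cdot> p0 A C \<cdot> f)) \<cdot> ftimes S (I (pp A C)) (p1 A B) \<cdot> N \<cdot> R (R g) \<cdot> p1 B C"
    using assms W N by simp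
  also have "W \<cdot> rs (p0 (pp A C) (pp A B) \<cdot> p0 A C \<cdot> f) =
      rs (W \<cdot> p0 (pp A C) (pp A B) \<cdot> p0 A C \<cdot> f) \<cdot> W"
    by (rule comp_rest) (use assms W in simp_all)
  also have "W \<cdot> p0 (pp A C) (pp A B) \<cdot> p0 A C \<cdot> f = E \<cdot> p0 A A \<cdot> f"
    using assms E rEK by (simp add: W_def)
  also have "rs (E \<cdot> p0 A A \<cdot> f) = E"
    unfolding E_def by (rule rest_comp_D_absorb(1)[where B = B]) (use assms in simp_all)
  also have "(E \<cdot> W) \<cdot> ftimes S (I (pp A C)) (p1 A B) \<cdot> N \<cdot> R (R g) \<cdot> p1 B C =
      (W \<cdot> ftimes S (I (pp A C)) (p1 A B)) \<cdot> N \<cdot> R (R g) \<cdot> p1 B C"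
    using assms E W N rW rest_comp_self[of W] by (simp del: rest_comp_self)
  also have "W \<cdot> ftimes S (I (pp A C)) (p1 A B) = \<langle>p0 A A \<cdot> iota0 S A C, E \<cdot> Dfromrd S f\<rangle>"
    using assms E by (simp add: W_def pair_ftimes D_unfold)
  also have "\<langle>p0 A A \<cdot> iota0 S A C, E \<cdot> Dfromrd S f\<rangle> \<cdot> N \<cdot> R (R g) \<cdot> p1 B C =
      (\<langle>p0 A A \<cdot> iota0 S A C, E \<cdot> Dfromrd S f\<rangle> \<cdot> N \<cdot> R (R g)) \<cdot> p1 B C"
    using assms E N by simp
  also have "\<dots> = E \<cdot> \<langle>p0 A A \<cdot> f, Dfromrd S f\<rangle> \<cdot> Dfromrd S g"
    unfolding E_def N_def by (rule pair_iota0_D_comp_rd_rd_pr1[OF assms])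
  finally show ?thesis unfolding E_def .
qed

lemma D_comp:
  assumes "f \<in> arr S" "g \<in> arr S" "src S f = A" "tgt S f = B" "src S g = B" "tgt S g = C"
    "A \<in> obj S" "B \<in> obj S" "C \<in> obj S"
  shows "Dfromrd S (f \<cdot> g) = \<langle>p0 A A \<cdot> f, Dfromrd S f\<rangle> \<cdot> Dfromrd S g"
proof -
  define Y where "Y = \<langle>p0 A A \<cdot> f, Dfromrd S f\<rangle> \<cdot> Dfromrd S g"
  have Y: "Y \<in> arr S" "src S Y = pp A A" using assms by (simp_all add: Y_def)
  have "rs Y = rs (\<langle>p0 A A \<cdot> f, Dfromrd S f\<rangle> \<cdot> rs (Dfromrd S g))"
    unfolding Y_def by (rule rest_comp_rest[symmetric]) (use assms in simp_all)
  also have "rs (Dfromrd S g) = rs (p0 B B \<cdot> g)" using assms by (simp add: rest_D ftimes_rest_ident)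
  also have "rs (\<langle>p0 A A \<cdot> f, Dfromrd S f\<rangle> \<cdot> rs (p0 B B \<cdot> g)) =
      rs (\<langle>p0 A A \<cdot> f, Dfromrd S f\<rangle> \<cdot> p0 B B \<cdot> g)"
    by (rule rest_comp_rest) (use assms in simp_all)
  also have "\<dots> = rs (rs (Dfromrd S f) \<cdot> p0 A A \<cdot> f \<cdot> g)" using assms by simp
  also have "\<dots> = rs (Dfromrd S f) \<cdot> rs (p0 A A \<cdot> f \<cdot> g)"
    by (rule rest_rest_comp) (use assms in simp_all)
  also have "\<dots> = rs (p0 A A \<cdot> f \<cdot> g) \<cdot> rs (Dfromrd S f)"
    by (rule rest_commute) (use assms in simp_all)
  also have "\<dots> = rs (rs (p0 A A \<cdot> f \<cdot> g) \<cdot> Dfromrd S f)"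
    by (rule rest_rest_comp[symmetric]) (use assms in simp_all)
  also have "\<dots> = rs (p0 A A \<cdot> f \<cdot> g)"
    by (rule rest_comp_D_absorb(2)[where B = B]) (use assms in simp_all)
  finally have "rs (p0 A A \<cdot> f \<cdot> g) \<cdot> Y = Y" using Y rest_comp_self[of Y] by simp
  then show ?thesis using D_comp_restricted[OF assms] by (simp only: Y_def)
qed

lemma rd_ident_times_pr0_pr1:
  assumes "A \<in> obj S" "B \<in> obj S" "C \<in> obj S"
  shows "R (ftimes S (I C) (p0 A B)) \<cdot> p1 C (pp A B) =
     p1 (pp C (pp A B)) (pp C A) \<cdot> p1 C A \<cdot> iota0 S A B"
proof -
  have T: "ftimes S (I C) (p0 A B) = \<langle>p0 C (pp A B), p1 C (pp A B) \<cdot> p0 A B\<rangle>"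
    using assms by (simp add: ftimes_def)
  have a: "R (ftimes S (I C) (p0 A B)) = ftimes S (I (pp C (pp A B))) (p0 C A) \<cdot> R (p0 C (pp A B)) \<oplus>
      ftimes S (I (pp C (pp A B))) (p1 C A) \<cdot> R (p1 C (pp A B) \<cdot> p0 A B)"
    unfolding T by (rule rd_pair) (use assms in simp_all)
  have b: "R (p1 C (pp A B) \<cdot> p0 A B) = p1 (pp C (pp A B)) A \<cdot> iota0 S A B \<cdot> iota1 S C (pp A B)"
    using assms by (simp add: rd_comp rd_pr)
  show ?thesis unfolding a b using assms by (simp add: plus_pr rd_pr)
qed

lemma rd_ident_times_pr1_pr1:
  assumes "A \<in> obj S" "B \<in> obj S" "C \<in> obj S"
  shows "R (ftimes S (I C) (p1 A B)) \<cdot> p1 C (pp A B) =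
     p1 (pp C (pp A B)) (pp C B) \<cdot> p1 C B \<cdot> iota1 S A B"
proof -
  have T: "ftimes S (I C) (p1 A B) = \<langle>p0 C (pp A B), p1 C (pp A B) \<cdot> p1 A B\<rangle>"
    using assms by (simp add: ftimes_def)
  have a: "R (ftimes S (I C) (p1 A B)) = ftimes S (I (pp C (pp A B))) (p0 C B) \<cdot> R (p0 C (pp A B)) \<oplus>
      ftimes S (I (pp C (pp A B))) (p1 C B) \<cdot> R (p1 C (pp A B) \<cdot> p1 A B)"
    unfolding T by (rule rd_pair) (use assms in simp_all)
  have b: "R (p1 C (pp A B) \<cdot> p1 A B) = p1 (pp C (pp A B)) B \<cdot> iota1 S A B \<cdot> iota1 S C (pp A B)"
    using assms by (simp add: rd_comp rd_pr)
  show ?thesis unfolding a b using assms by (simp add: plus_pr rd_pr)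
qed

lemma K_rd_ident_times_pr0:
  assumes "f \<in> arr S" "src S f = C" "tgt S f = A" "A \<in> obj S" "B \<in> obj S" "C \<in> obj S"
  shows "K C (pp A B) \<cdot> R (ftimes S (I C) (p0 A B) \<cdot> R f) \<cdot> p1 C (pp A B) = Dfromrd S f \<cdot> iota0 S A B"
proof -
  have a: "R (ftimes S (I C) (p0 A B) \<cdot> R f) = \<langle>p0 (pp C (pp A B)) C, \<langle>p0 (pp C (pp A B)) C \<cdot> ftimes S (I C) (p0 A B), p1 (pp C (pp A B)) C\<rangle> \<cdot> R (R f)\<rangle> \<cdot> R (ftimes S (I C) (p0 A B))"
    by (rule rd_comp) (use assms in simp_all)
  have i0: "iota0 S C (pp A B) \<cdot> ftimes S (I C) (p0 A B) = iota0 S C A"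
    using assms by (simp add: ftimes_def comp_pair iota0_def)
  have b: "K C (pp A B) \<cdot> \<langle>p0 (pp C (pp A B)) C, \<langle>p0 (pp C (pp A B)) C \<cdot> ftimes S (I C) (p0 A B), p1 (pp C (pp A B)) C\<rangle> \<cdot> R (R f)\<rangle>
     = \<langle>p0 C C \<cdot> iota0 S C (pp A B), K C A \<cdot> R (R f)\<rangle>"
  proof -
    have "K C (pp A B) \<cdot> \<langle>p0 (pp C (pp A B)) C, \<langle>p0 (pp C (pp A B)) C \<cdot> ftimes S (I C) (p0 A B), p1 (pp C (pp A B)) C\<rangle> \<cdot> R (R f)\<rangle>
      = \<langle>p0 C C \<cdot> iota0 S C (pp A B), \<langle>p0 C C \<cdot> iota0 S C (pp A B) \<cdot> ftimes S (I C) (p0 A B), p1 C C\<rangle> \<cdot> R (R f)\<rangle>"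
      using assms by (simp add: comp_pair comp_pair_comp)
    also have "iota0 S C (pp A B) \<cdot> ftimes S (I C) (p0 A B) = iota0 S C A" by (rule i0)
    also have "\<langle>p0 C C \<cdot> iota0 S C A, p1 C C\<rangle> = K C A" using assms by (simp add: ftimes_def)
    finally show ?thesis .
  qed
  have "K C (pp A B) \<cdot> R (ftimes S (I C) (p0 A B) \<cdot> R f) \<cdot> p1 C (pp A B) =
    (K C (pp A B) \<cdot> \<langle>p0 (pp C (pp A B)) C, \<langle>p0 (pp C (pp A B)) C \<cdot> ftimes S (I C) (p0 A B), p1 (pp C (pp A B)) C\<rangle> \<cdot> R (R f)\<rangle>) \<cdot> (R (ftimes S (I C) (p0 A B)) \<cdot> p1 C (pp A B))"
    unfolding a using assms by simp
  also have "\<dots> = \<langle>p0 C C \<cdot> iota0 S C (pp A B), K C A \<cdot> R (R f)\<rangle> \<cdot> p1 (pp C (pp A B)) (pp C A) \<cdot> p1 C A \<cdot> iota0 S A B"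
    unfolding b rd_ident_times_pr0_pr1[OF assms(4-6)] ..
  also have "\<dots> = Dfromrd S f \<cdot> iota0 S A B" using assms by (simp add: D_unfold)
  finally show ?thesis .
qed

lemma K_rd_ident_times_pr1:
  assumes "f \<in> arr S" "src S f = C" "tgt S f = B" "A \<in> obj S" "B \<in> obj S" "C \<in> obj S"
  shows "K C (pp A B) \<cdot> R (ftimes S (I C) (p1 A B) \<cdot> R f) \<cdot> p1 C (pp A B) = Dfromrd S f \<cdot> iota1 S A B"
proof -
  have a: "R (ftimes S (I C) (p1 A B) \<cdot> R f) = \<langle>p0 (pp C (pp A B)) C, \<langle>p0 (pp C (pp A B)) C \<cdot> ftimes S (I C) (p1 A B), p1 (pp C (pp A B)) C\<rangle> \<cdot> R (R f)\<rangle> \<cdot> R (ftimes S (I C) (p1 A B))"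
    by (rule rd_comp) (use assms in simp_all)
  have i0: "iota0 S C (pp A B) \<cdot> ftimes S (I C) (p1 A B) = iota0 S C B"
    using assms by (simp add: ftimes_def comp_pair iota0_def)
  have b: "K C (pp A B) \<cdot> \<langle>p0 (pp C (pp A B)) C, \<langle>p0 (pp C (pp A B)) C \<cdot> ftimes S (I C) (p1 A B), p1 (pp C (pp A B)) C\<rangle> \<cdot> R (R f)\<rangle>
     = \<langle>p0 C C \<cdot> iota0 S C (pp A B), K C B \<cdot> R (R f)\<rangle>"
  proof -
    have "K C (pp A B) \<cdot> \<langle>p0 (pp C (pp A B)) C, \<langle>p0 (pp C (pp A B)) C \<cdot> ftimes S (I C) (p1 A B), p1 (pp C (pp A B)) C\<rangle> \<cdot> R (R f)\<rangle>
      = \<langle>p0 C C \<cdot> iota0 S C (pp A B), \<langle>p0 C C \<cdot> iota0 S C (pp A B) \<cdot> ftimes S (I C) (p1 A B), p1 C C\<rangle> \<cdot> R (R f)\<rangle>"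
      using assms by (simp add: comp_pair comp_pair_comp)
    also have "iota0 S C (pp A B) \<cdot> ftimes S (I C) (p1 A B) = iota0 S C B" by (rule i0)
    also have "\<langle>p0 C C \<cdot> iota0 S C B, p1 C C\<rangle> = K C B" using assms by (simp add: ftimes_def)
    finally show ?thesis .
  qed
  have "K C (pp A B) \<cdot> R (ftimes S (I C) (p1 A B) \<cdot> R f) \<cdot> p1 C (pp A B) =
    (K C (pp A B) \<cdot> \<langle>p0 (pp C (pp A B)) C, \<langle>p0 (pp C (pp A B)) C \<cdot> ftimes S (I C) (p1 A B), p1 (pp C (pp A B)) C\<rangle> \<cdot> R (R f)\<rangle>) \<cdot> (R (ftimes S (I C) (p1 A B)) \<cdot> p1 C (pp A B))"
    unfolding a using assms by simp
  also have "\<dots> = \<langle>p0 C C \<cdot> iota0 S C (pp A B), K C B \<cdot> R (R f)\<rangle> \<cdot> p1 (pp C (pp A B)) (pp C B) \<cdot> p1 C B \<cdot> iota1 S A B"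
    unfolding b rd_ident_times_pr1_pr1[OF assms(4-6)] ..
  also have "\<dots> = Dfromrd S f \<cdot> iota1 S A B" using assms by (simp add: D_unfold)
  finally show ?thesis .
qed

lemma D_pair:
  assumes "f \<in> arr S" "g \<in> arr S" "src S f = C" "src S g = C" "tgt S f = A" "tgt S g = B"
    "A \<in> obj S" "B \<in> obj S" "C \<in> obj S"
  shows "Dfromrd S \<langle>f, g\<rangle> = \<langle>Dfromrd S f, Dfromrd S g\<rangle>"
proof -
  have r: "R \<langle>f, g\<rangle> = ftimes S (I C) (p0 A B) \<cdot> R f \<oplus> ftimes S (I C) (p1 A B) \<cdot> R g"
    by (rule rd_pair) (use assms in simp_all)
  have "Dfromrd S \<langle>f, g\<rangle> = K C (pp A B) \<cdot> R (R \<langle>f, g\<rangle>) \<cdot> p1 C (pp A B)"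
    using assms by (simp add: D_unfold)
  also have "\<dots> = K C (pp A B) \<cdot> R (ftimes S (I C) (p0 A B) \<cdot> R f) \<cdot> p1 C (pp A B) \<oplus>
                   K C (pp A B) \<cdot> R (ftimes S (I C) (p1 A B) \<cdot> R g) \<cdot> p1 C (pp A B)"
    unfolding r using assms by (simp add: plus_pr)
  also have "\<dots> = Dfromrd S f \<cdot> iota0 S A B \<oplus> Dfromrd S g \<cdot> iota1 S A B"
    using K_rd_ident_times_pr0[where f=f and C=C and A=A and B=B] K_rd_ident_times_pr1[where f=g and C=C and A=A and B=B] assms by simp
  also have "\<dots> = \<langle>Dfromrd S f, Z (pp C C) B\<rangle> \<oplus> \<langle>Z (pp C C) A, Dfromrd S g\<rangle>"
    using assms by (simp add: comp_iota0 comp_iota1)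
  also have "\<dots> = \<langle>Dfromrd S f \<oplus> Z (pp C C) A, Z (pp C C) B \<oplus> Dfromrd S g\<rangle>"
    by (rule pair_plus) (use assms in simp_all)
  also have "\<dots> = \<langle>Dfromrd S f, Dfromrd S g\<rangle>" using assms by simp
  finally show ?thesis .
qed

lemma D_K:
  assumes "A \<in> obj S" "B \<in> obj S"
  shows "Dfromrd S (K A B) = p1 (pp A A) (pp A A) \<cdot> K A B"
proof -
  have K: "K A B = \<langle>p0 A A \<cdot> iota0 S A B, p1 A A\<rangle>" using assms by (simp add: ftimes_def)
  have Di: "Dfromrd S (iota0 S A B) = p1 A A \<cdot> iota0 S A B"
  proof -
    have "Dfromrd S (iota0 S A B) = \<langle>Dfromrd S (I A), Dfromrd S (Z A B)\<rangle>"
      unfolding iota0_def by (rule D_pair[where A=A and B=B and C=A]) (use assms in simp_all)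
    also have "\<dots> = \<langle>p1 A A, Z (pp A A) B\<rangle>" using assms by (simp add: D_ident D_zer)
    also have "\<dots> = p1 A A \<cdot> iota0 S A B" using assms by (simp add: comp_iota0)
    finally show ?thesis .
  qed
  have D0: "Dfromrd S (p0 A A \<cdot> iota0 S A B) = p1 (pp A A) (pp A A) \<cdot> p0 A A \<cdot> iota0 S A B"
  proof -
    have "Dfromrd S (p0 A A \<cdot> iota0 S A B) = \<langle>p0 (pp A A) (pp A A) \<cdot> p0 A A, Dfromrd S (p0 A A)\<rangle> \<cdot> Dfromrd S (iota0 S A B)"
      by (rule D_comp[where A="pp A A" and B=A and C="pp A B"]) (use assms in simp_all)
    also have "\<dots> = p1 (pp A A) (pp A A) \<cdot> p0 A A \<cdot> iota0 S A B"
      using assms by (simp add: Di D_pr0)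
    finally show ?thesis .
  qed
  have "Dfromrd S (K A B) = \<langle>Dfromrd S (p0 A A \<cdot> iota0 S A B), Dfromrd S (p1 A A)\<rangle>"
    unfolding K by (rule D_pair[where A="pp A B" and B=A and C="pp A A"]) (use assms in simp_all)
  also have "\<dots> = p1 (pp A A) (pp A A) \<cdot> \<langle>p0 A A \<cdot> iota0 S A B, p1 A A\<rangle>"
    using assms by (simp add: D0 D_pr1 comp_pair)
  finally show ?thesis unfolding K[symmetric] .
qed

lemma pair_zer_D_rd_rd:
  assumes "f \<in> arr S" "src S f = A" "tgt S f = B" "A \<in> obj S" "B \<in> obj S"
    "x \<in> arr S" "v \<in> arr S" "w \<in> arr S" "src S v = src S x" "src S w = src S x"
    "tgt S x = pp A B" "tgt S v = A" "tgt S w = A"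
  shows "\<langle>\<langle>x, v\<rangle>, \<langle>Z (src S x) (pp A B), w\<rangle>\<rangle> \<cdot> Dfromrd S (R (R f)) = rs v \<cdot> \<langle>x, w\<rangle> \<cdot> R (R f)"
proof -
  define P where "P = \<langle>ftimes S (I (pp A B)) (p0 A A), ftimes S (Z (pp A B) (pp A B)) (p1 A A)\<rangle>"
  have P: "P \<in> arr S" "src S P = pp (pp A B) (pp A A)" "tgt S P = pp (pp (pp A B) A) (pp (pp A B) A)"
    using assms by (simp_all add: P_def)
  have rd6: "P \<cdot> Dfromrd S (R (R f)) = ftimes S (I (pp A B)) (p1 A A) \<cdot> R (R f)"
  proof -
    have "((P \<cdot> K (pp (pp A B) A) (pp A B)) \<cdot> R (R (R (R f)))) \<cdot> p1 (pp (pp A B) A) (pp A B) =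
        ftimes S (I (pp A B)) (p1 A A) \<cdot> R (R f)"
      unfolding P_def by (rule rd_axiom6) (use assms in simp_all)
    then show ?thesis using assms P by (simp add: D_unfold)
  qed
  have "\<langle>\<langle>x, v\<rangle>, \<langle>Z (src S x) (pp A B), w\<rangle>\<rangle> = \<langle>x, \<langle>v, w\<rangle>\<rangle> \<cdot> P"
    unfolding P_def by (rule pair_pair_comp_ftimes_zer[symmetric]) (use assms in simp_all)
  then have "\<langle>\<langle>x, v\<rangle>, \<langle>Z (src S x) (pp A B), w\<rangle>\<rangle> \<cdot> Dfromrd S (R (R f)) =
      \<langle>x, \<langle>v, w\<rangle>\<rangle> \<cdot> P \<cdot> Dfromrd S (R (R f))"
    using assms P by simp
  also have "\<dots> = \<langle>x, rs v \<cdot> w\<rangle> \<cdot> R (R f)"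
    unfolding rd6 using assms by (simp add: pair_ftimes_comp)
  also have "\<langle>x, rs v \<cdot> w\<rangle> = rs v \<cdot> \<langle>x, w\<rangle>" by (rule pair_rest_right) (use assms in simp_all)
  finally show ?thesis using assms by simp
qed

lemma D_D_unfold:
  assumes "f \<in> arr S" "src S f = A" "tgt S f = B" "A \<in> obj S" "B \<in> obj S"
  shows "Dfromrd S (Dfromrd S f) = ftimes S (K A B) (K A B) \<cdot>
     rs (p0 (pp (pp A B) A) (pp (pp A B) A) \<cdot> R (R f)) \<cdot> Dfromrd S (R (R f)) \<cdot> p1 A B"
proof -
  have "Dfromrd S (R (R f) \<cdot> p1 A B) =
      \<langle>p0 (pp (pp A B) A) (pp (pp A B) A) \<cdot> R (R f), Dfromrd S (R (R f))\<rangle> \<cdot> Dfromrd S (p1 A B)"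
    by (rule D_comp[where A = "pp (pp A B) A" and B = "pp A B" and C = B]) (use assms in simp_all)
  then have DR: "Dfromrd S (R (R f) \<cdot> p1 A B) =
      rs (p0 (pp (pp A B) A) (pp (pp A B) A) \<cdot> R (R f)) \<cdot> Dfromrd S (R (R f)) \<cdot> p1 A B"
    using assms by (simp add: D_pr1)
  have "Dfromrd S (Dfromrd S f) = Dfromrd S (K A B \<cdot> (R (R f) \<cdot> p1 A B))"
    using assms by (simp add: D_unfold)
  also have "\<dots> = \<langle>p0 (pp A A) (pp A A) \<cdot> K A B, Dfromrd S (K A B)\<rangle> \<cdot> Dfromrd S (R (R f) \<cdot> p1 A B)"
    by (rule D_comp[where A = "pp A A" and B = "pp (pp A B) A" and C = B]) (use assms in simp_all)
  also have "Dfromrd S (K A B) = p1 (pp A A) (pp A A) \<cdot> K A B" using assms by (simp add: D_K)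
  also have "\<langle>p0 (pp A A) (pp A A) \<cdot> K A B, p1 (pp A A) (pp A A) \<cdot> K A B\<rangle> = ftimes S (K A B) (K A B)"
    unfolding ftimes_def[of S "K A B" "K A B"] using assms by simp
  finally show ?thesis unfolding DR .
qed

lemma pair_zer_comp_K_ftimes:
  assumes "a \<in> arr S" "v \<in> arr S" "w \<in> arr S" "src S v = src S a" "src S w = src S a"
    "tgt S a = A" "tgt S v = A" "tgt S w = A" "A \<in> obj S" "B \<in> obj S"
  shows "\<langle>\<langle>a, v\<rangle>, \<langle>Z (src S a) A, w\<rangle>\<rangle> \<cdot> ftimes S (K A B) (K A B) =
    \<langle>\<langle>\<langle>a, Z (src S a) B\<rangle>, v\<rangle>, \<langle>Z (src S a) (pp A B), w\<rangle>\<rangle>"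
proof -
  have "\<langle>\<langle>a, v\<rangle>, \<langle>Z (src S a) A, w\<rangle>\<rangle> \<cdot> ftimes S (K A B) (K A B) =
      \<langle>\<langle>a, v\<rangle> \<cdot> K A B, \<langle>Z (src S a) A, w\<rangle> \<cdot> K A B\<rangle>"
    by (rule pair_ftimes) (use assms in simp_all)
  also have "\<langle>a, v\<rangle> \<cdot> K A B = \<langle>\<langle>a, Z (src S a) B\<rangle>, v\<rangle>" by (rule pair_comp_K) (use assms in simp_all)
  also have "\<langle>Z (src S a) A, w\<rangle> \<cdot> K A B = \<langle>Z (src S a) (pp A B), w\<rangle>"
    using pair_comp_K[of "Z (src S a) A" w A B] assms by simp
  finally show ?thesis .
qed

lemma rest_pair_zer_comp_rd_rd:
  assumes "a \<in> arr S" "v \<in> arr S" "src S v = src S a" "tgt S a = A" "tgt S v = A"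
    "f \<in> arr S" "src S f = A" "tgt S f = B" "A \<in> obj S" "B \<in> obj S"
  shows "rs (\<langle>\<langle>a, Z (src S a) B\<rangle>, v\<rangle> \<cdot> R (R f)) = rs v \<cdot> rs (a \<cdot> f)"
proof -
  define a' where "a' = \<langle>a, Z (src S a) B\<rangle>"
  have a': "a' \<in> arr S" "src S a' = src S a" "tgt S a' = pp A B" using assms by (simp_all add: a'_def)
  have "rs (\<langle>a', v\<rangle> \<cdot> R (R f)) = rs (\<langle>a', v\<rangle> \<cdot> rs (R (R f)))"
    by (rule rest_comp_rest[symmetric]) (use assms a' in simp_all)
  also have "rs (R (R f)) = rs (p0 (pp A B) A \<cdot> R f)" by (rule rest_rd_pr) (use assms in simp_all)
  also have "rs (\<langle>a', v\<rangle> \<cdot> rs (p0 (pp A B) A \<cdot> R f)) = rs (\<langle>a', v\<rangle> \<cdot> p0 (pp A B) A \<cdot> R f)"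
    by (rule rest_comp_rest) (use assms a' in simp_all)
  also have "\<dots> = rs (rs v \<cdot> a' \<cdot> R f)" using assms a' by simp
  also have "\<dots> = rs v \<cdot> rs (a' \<cdot> R f)" by (rule rest_rest_comp) (use assms a' in simp_all)
  also have "a' \<cdot> R f = rs (a \<cdot> f) \<cdot> Z (src S a) (src S f)"
    unfolding a'_def by (rule pair_zer_rd) (use assms in simp_all)
  also have "rs (rs (a \<cdot> f) \<cdot> Z (src S a) (src S f)) = rs (a \<cdot> f)" using assms by simp
  finally show ?thesis unfolding a'_def .
qed

lemma rest_pair_comp_D:
  assumes "a \<in> arr S" "w \<in> arr S" "src S w = src S a" "tgt S a = A" "tgt S w = A"
    "f \<in> arr S" "src S f = A" "tgt S f = B" "A \<in> obj S" "B \<in> obj S"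
  shows "rs (\<langle>a, w\<rangle> \<cdot> Dfromrd S f) = rs w \<cdot> rs (a \<cdot> f)"
proof -
  have "rs (\<langle>a, w\<rangle> \<cdot> Dfromrd S f) = rs (\<langle>a, w\<rangle> \<cdot> rs (Dfromrd S f))"
    by (rule rest_comp_rest[symmetric]) (use assms in simp_all)
  also have "rs (Dfromrd S f) = rs (p0 A A \<cdot> f)" using assms by (simp add: rest_D ftimes_rest_ident)
  also have "rs (\<langle>a, w\<rangle> \<cdot> rs (p0 A A \<cdot> f)) = rs (\<langle>a, w\<rangle> \<cdot> p0 A A \<cdot> f)"
    by (rule rest_comp_rest) (use assms in simp_all)
  also have "\<dots> = rs w \<cdot> rs (a \<cdot> f)" using assms by simp
  finally show ?thesis .
qed

lemma pair_zer_D_D: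
  assumes "f \<in> arr S" "src S f = A" "tgt S f = B" "A \<in> obj S" "B \<in> obj S"
    "a \<in> arr S" "v \<in> arr S" "w \<in> arr S" "src S v = src S a" "src S w = src S a"
    "tgt S a = A" "tgt S v = A" "tgt S w = A"
  shows "\<langle>\<langle>a, v\<rangle>, \<langle>Z (src S a) A, w\<rangle>\<rangle> \<cdot> Dfromrd S (Dfromrd S f) = rs v \<cdot> \<langle>a, w\<rangle> \<cdot> Dfromrd S f"
proof -
  define a' where "a' = \<langle>a, Z (src S a) B\<rangle>"
  have a': "a' \<in> arr S" "src S a' = src S a" "tgt S a' = pp A B" using assms by (simp_all add: a'_def)
  define y where "y = \<langle>\<langle>a', v\<rangle>, \<langle>Z (src S a) (pp A B), w\<rangle>\<rangle>"
  have y: "y \<in> arr S" "src S y = src S a" "tgt S y = pp (pp (pp A B) A) (pp (pp A B) A)"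
    using assms a' by (simp_all add: y_def)
  define P0RR where "P0RR = p0 (pp (pp A B) A) (pp (pp A B) A) \<cdot> R (R f)"
  have "\<langle>\<langle>a, v\<rangle>, \<langle>Z (src S a) A, w\<rangle>\<rangle> \<cdot> Dfromrd S (Dfromrd S f) =
      (\<langle>\<langle>a, v\<rangle>, \<langle>Z (src S a) A, w\<rangle>\<rangle> \<cdot> ftimes S (K A B) (K A B)) \<cdot>
        rs P0RR \<cdot> Dfromrd S (R (R f)) \<cdot> p1 A B"
    using assms by (simp add: D_D_unfold P0RR_def)
  also have "\<dots> = (y \<cdot> rs P0RR) \<cdot> Dfromrd S (R (R f)) \<cdot> p1 A B"
    using assms y pair_zer_comp_K_ftimes[of a v w A B] by (simp add: y_def a'_def P0RR_def)
  also have "y \<cdot> rs P0RR = (rs w \<cdot> rs v \<cdot> rs (a \<cdot> f)) \<cdot> y"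
  proof -
    have "y \<cdot> rs P0RR = rs (y \<cdot> P0RR) \<cdot> y"
      unfolding P0RR_def by (rule comp_rest) (use assms y in simp_all)
    moreover have "rs (y \<cdot> P0RR) = rs w \<cdot> rs v \<cdot> rs (a \<cdot> f)"
    proof -
      have "y \<cdot> P0RR = rs w \<cdot> \<langle>a', v\<rangle> \<cdot> R (R f)" using assms a' by (simp add: y_def P0RR_def)
      then have "rs (y \<cdot> P0RR) = rs w \<cdot> rs (\<langle>a', v\<rangle> \<cdot> R (R f))" using assms a' by simp
      then show ?thesis unfolding a'_def using rest_pair_zer_comp_rd_rd[of a v A f B] assms by simp
    qed
    ultimately show ?thesis by simp
  qed
  also have "((rs w \<cdot> rs v \<cdot> rs (a \<cdot> f)) \<cdot> y) \<cdot> Dfromrd S (R (R f)) \<cdot> p1 A B =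
      (rs w \<cdot> rs v \<cdot> rs (a \<cdot> f)) \<cdot> (y \<cdot> Dfromrd S (R (R f))) \<cdot> p1 A B"
    using assms y by simp
  also have "y \<cdot> Dfromrd S (R (R f)) = rs v \<cdot> \<langle>a', w\<rangle> \<cdot> R (R f)"
    unfolding y_def using pair_zer_D_rd_rd[of f A B a' v w] assms a' by simp
  also have "(rs w \<cdot> rs v \<cdot> rs (a \<cdot> f)) \<cdot> (rs v \<cdot> \<langle>a', w\<rangle> \<cdot> R (R f)) \<cdot> p1 A B =
      rs w \<cdot> rs v \<cdot> rs (a \<cdot> f) \<cdot> rs v \<cdot> \<langle>a', w\<rangle> \<cdot> R (R f) \<cdot> p1 A B"
    using assms a' by simp
  also have "\<langle>a', w\<rangle> \<cdot> R (R f) \<cdot> p1 A B = \<langle>a, w\<rangle> \<cdot> Dfromrd S f"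
    unfolding a'_def using pair_comp_D[of a w A f B] assms by simp
  also have "rs w \<cdot> rs v \<cdot> rs (a \<cdot> f) \<cdot> rs v \<cdot> \<langle>a, w\<rangle> \<cdot> Dfromrd S f =
      rs v \<cdot> (rs w \<cdot> rs (a \<cdot> f)) \<cdot> \<langle>a, w\<rangle> \<cdot> Dfromrd S f"
    using assms by (simp add: rest_commute_simps)
  also have "(rs w \<cdot> rs (a \<cdot> f)) \<cdot> \<langle>a, w\<rangle> \<cdot> Dfromrd S f = \<langle>a, w\<rangle> \<cdot> Dfromrd S f"
    using rest_comp_self[of "\<langle>a, w\<rangle> \<cdot> Dfromrd S f"] rest_pair_comp_D[of a w A f B] assms by simp
  finally show ?thesis .
qed

end

theorem mainTheorem1:
  fixes S :: "('o, 'm, 'x) cat_data_scheme"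
  assumes "is_RDRC S"
  shows "is_DRC S (Dfromrd S)"
proof -
  interpret reverse_differential S by (rule reverse_differential.intro) (fact assms)
  show ?thesis
    unfolding is_DRC_def
  proof (intro conjI ballI)
    show "is_CLARC S" by (rule CLARC)
  qed (auto simp: hom_def D_zer D_plus D_ident D_pr0 D_pr1 D_rest rest_D
      intro: pair_plus_D pair_zer_D D_pair D_comp pair_zer_D_D D_D_swap)
qed

end
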